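(* Let $0<\varepsilon<\frac12$, $c=(1-\varepsilon)^{1/h}(b_1\cdots b_h)^{1/h^2}/\Gamma(1/h)$, and let $\mathscr{A}$ be the random set with $0\in\mathscr{A}$ and mutually independent events $\{n\in\mathscr{A}\}$ ($n\ge1$) of probability $\min\{c(n\log n)^{1/h}/n,1\}$. For an integer $n\ge1$, let $\mathcal{S}[n]$ be the collection of distinct sets $\{k_1,\dots,k_h\}$ arising from tuples $(k_1,\dots,k_h)\in\mathbb{Z}_{\ge0}^h$ with $b_1k_1+\cdots+b_hk_h=n$. For integers $m>n\ge2$ define \[ \Delta(n,m):=\sum_{\substack{R\ne S\in\mathcal{S}[n]\\ R\cap S\ne\varnothing}}\Pr(R\cup S\subseteq\mathscr{A})+2\sum_{\substack{R\in\mathcal{S}[n],\,S\in\mathcal{S}[m]\\ R\cap S\ne\varnothing}}\Pr(R\cup S\subseteq\mathscr{A})+\sum_{\substack{R\ne S\in\mathcal{S}[m]\\ R\cap S\ne\varnothing}}\Pr(R\cup S\subseteq\mathscr{A}), \] where the first and last sums are over ordered pairs of distinct sets. Then for every $\eta>0$ there is a constant $K_\eta$ such that for all integers $m>n\ge2$, \[ \Delta(n,m)\le K_\eta\Big[\big(1+(m-n)^{-1/h+\eta}\big)\,n^{-1/h+\eta}+m^{-1/h+\eta}\Big]. \]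
   Context: Fix an integer $h\ge 2$ and positive integers $b_1,\dots,b_h$, not necessarily distinct, with $\gcd(b_1,\dots,b_h)=1$. *)

theory Defs
  imports "HOL-Probability.Probability"
begin

text \<open>Parameters: h, weights b 0, ..., b (h-1) (the paper's b_1..b_h), and epsilon.\<close>

definition cconst :: "nat \<Rightarrow> (nat \<Rightarrow> nat) \<Rightarrow> real \<Rightarrow> real" where
  "cconst h b \<epsilon> = (1 - \<epsilon>) powr (1 / real h) * (real (\<Prod>i<h. b i)) powr (1 / (real h)^2)
      / Gamma (1 / real h)"

definition pr_in :: "nat \<Rightarrow> (nat \<Rightarrow> nat) \<Rightarrow> real \<Rightarrow> nat \<Rightarrow> real" where
  "pr_in h b \<epsilon> n = (if n = 0 then 1 else
      min (cconst h b \<epsilon> * (real n * ln (real n)) powr (1 / real h) / real n) 1)"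

text \<open>The random set: omega x is the event "x is in the set"; independent Bernoulli coordinates.\<close>
definition randset :: "nat \<Rightarrow> (nat \<Rightarrow> nat) \<Rightarrow> real \<Rightarrow> (nat \<Rightarrow> bool) measure" where
  "randset h b \<epsilon> = (\<Pi>\<^sub>M x\<in>(UNIV::nat set). measure_pmf (bernoulli_pmf (pr_in h b \<epsilon> x)))"

definition Pr_sub :: "nat \<Rightarrow> (nat \<Rightarrow> nat) \<Rightarrow> real \<Rightarrow> nat set \<Rightarrow> real" where
  "Pr_sub h b \<epsilon> T = measure (randset h b \<epsilon>) {\<omega> \<in> space (randset h b \<epsilon>). \<forall>x\<in>T. \<omega> x}"

definition Sset :: "nat \<Rightarrow> (nat \<Rightarrow> nat) \<Rightarrow> nat \<Rightarrow> nat set set" where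
  "Sset h b n = {k ` {..<h} | k :: nat \<Rightarrow> nat. (\<Sum>i<h. b i * k i) = n}"

definition Delta :: "nat \<Rightarrow> (nat \<Rightarrow> nat) \<Rightarrow> real \<Rightarrow> nat \<Rightarrow> nat \<Rightarrow> real" where
  "Delta h b \<epsilon> n m =
     (\<Sum>(R, S) \<in> {(R, S). R \<in> Sset h b n \<and> S \<in> Sset h b n \<and> R \<noteq> S \<and> R \<inter> S \<noteq> {}}.
         Pr_sub h b \<epsilon> (R \<union> S))
   + 2 * (\<Sum>(R, S) \<in> {(R, S). R \<in> Sset h b n \<and> S \<in> Sset h b m \<and> R \<inter> S \<noteq> {}}.
         Pr_sub h b \<epsilon> (R \<union> S))
   + (\<Sum>(R, S) \<in> {(R, S). R \<in> Sset h b m \<and> S \<in> Sset h b m \<and> R \<noteq> S \<and> R \<inter> S \<noteq> {}}.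
         Pr_sub h b \<epsilon> (R \<union> S))"

end

theory Submission
  imports Defs
begin

text \<open>
  A set \<open>{k\<^sub>1, ..., k\<^sub>h}\<close> in \<open>S[N]\<close> is the support of the multiset containing \<open>k\<^sub>i\<close> with
  multiplicity \<open>b\<^sub>i\<close>, which has size \<open>B = b\<^sub>1 + ... + b\<^sub>h\<close> and sum \<open>N\<close>. With
  \<open>a = 1 - 1/h - \<delta>\<close>, the inclusion probabilities are \<open>O((x + 1) powr -a)\<close>, so each sum in
  \<open>\<Delta>\<close> is bounded by sums of \<open>\<Prod>x\<in>R\<union>S. (x + 1) powr -a\<close> over pairs of such multisets with
  overlapping supports. Splitting a pair into its common part and its two private parts reduces
  these to sums over single multisets, which are estimated by induction on the number of distinct
  elements: each new element costs a convolution \<open>\<Sum>x. (x + 1) powr -a * (N - j x + 1) powr e\<close>,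
  which gains a factor \<open>N powr (1 - a)\<close>. For \<open>\<delta> = \<eta> / (2 h + 1)\<close> every configuration is
  \<open>O(N powr (-1/h + \<eta>))\<close>, except pairs with equal supports, which occur only for \<open>n \<noteq> m\<close>.
  There the largest element \<open>t\<close> and an element \<open>s\<close> whose multiplicities in the two multisets are
  not proportional to those of \<open>t\<close> are removed: the two sums form a regular 2x2 linear system
  that recovers \<open>t\<close> and \<open>s\<close>, and the weight of \<open>t\<close> alone supplies the missing factor
  \<open>N powr -a\<close>.
\<close>

lemma powr_increment_ge:
  fixes s y :: real
  assumes "0 < s" "s \<le> 1" "1 \<le> y"
  shows "s * (y + 1) powr (s - 1) \<le> (y + 1) powr s - y powr s"
proof -
  have "\<And>x. y \<le> x \<Longrightarrow> x \<le> y + 1 \<Longrightarrow>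
      ((\<lambda>x. x powr s) has_real_derivative s * x powr (s - 1)) (at x)"
    using assms by (intro has_real_derivative_powr) auto
  then obtain z where z: "y < z" "z < y + 1"
    and mvt: "(y + 1) powr s - y powr s = ((y + 1) - y) * (s * z powr (s - 1))"
    using MVT2[of y "y + 1" "\<lambda>x. x powr s" "\<lambda>x. s * x powr (s - 1)"] by auto
  have "(y + 1) powr (s - 1) \<le> z powr (s - 1)"
    using z assms by (intro powr_mono2') auto
  then show ?thesis
    using mvt assms by simp
qed

lemma sum_powr_le_nonpos_exponent:
  fixes e :: real
  assumes "-1 < e" "e \<le> 0"
  shows "(\<Sum>x\<le>N. (real x + 1) powr e) \<le> (real N + 1) powr (1 + e) / (1 + e)"
proof (induction N)
  case 0
  then show ?case
    using assms by (simp add: field_simps)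
next
  case (Suc N)
  have "(1 + e) * (real N + 2) powr e \<le> (real N + 2) powr (1 + e) - (real N + 1) powr (1 + e)"
    using powr_increment_ge[of "1 + e" "real N + 1"] assms by (simp add: add_ac)
  then have "(real N + 2) powr e \<le> ((real N + 2) powr (1 + e) - (real N + 1) powr (1 + e)) / (1 + e)"
    using assms by (simp add: pos_le_divide_eq mult.commute)
  then have step: "(real N + 2) powr e
      \<le> (real N + 2) powr (1 + e) / (1 + e) - (real N + 1) powr (1 + e) / (1 + e)"
    by (simp add: diff_divide_distrib)
  have "(\<Sum>x\<le>Suc N. (real x + 1) powr e)
      \<le> (real N + 1) powr (1 + e) / (1 + e) + (real N + 2) powr e"
    using Suc by (simp add: add_ac)
  also have "\<dots> \<le> (real N + 2) powr (1 + e) / (1 + e)"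
    using step by simp
  finally show ?case
    by (simp add: add_ac)
qed

lemma sum_powr_le:
  fixes e :: real
  assumes "-1 < e"
  shows "(\<Sum>x\<le>N. (real x + 1) powr e) \<le> (1 + 1 / (1 + e)) * (real N + 1) powr (1 + e)"
proof (cases "e \<le> 0")
  case True
  then show ?thesis
    using sum_powr_le_nonpos_exponent[OF assms True]
    by (simp add: distrib_right add_increasing)
next
  case False
  have "(\<Sum>x\<le>N. (real x + 1) powr e) \<le> (\<Sum>x\<le>N. (real N + 1) powr e)"
    using False by (intro sum_mono powr_mono2) auto
  also have "\<dots> = (real N + 1) powr (1 + e)"
    by (simp add: powr_add)
  moreover have "0 \<le> (real N + 1) powr (1 + e) / (1 + e)"
    using assms by simp
  ultimately show ?thesis
    by (simp add: distrib_right)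
qed

lemma powr_le_of_le_double:
  fixes u v e :: real
  assumes "0 < u" "u \<le> v" "v \<le> 2 * u"
  shows "u powr e \<le> 2 powr \<bar>e\<bar> * v powr e"
proof (cases "0 \<le> e")
  case True
  then have "u powr e \<le> v powr e"
    using assms by (intro powr_mono2) auto
  also have "\<dots> \<le> 2 powr \<bar>e\<bar> * v powr e"
    using mult_right_mono[of 1 "2 powr \<bar>e\<bar>" "v powr e"] ge_one_powr_ge_zero[of 2 "\<bar>e\<bar>"]
    by simp
  finally show ?thesis .
next
  case False
  then have "u powr e \<le> (v / 2) powr e"
    using assms by (intro powr_mono2') auto
  also have "\<dots> = 2 powr \<bar>e\<bar> * v powr e"
    using assms False by (simp add: powr_divide powr_minus field_simps)
  finally show ?thesis .
qed

lemma mult_powr_le_powr_add_powr: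
  fixes u v \<alpha> \<beta> \<gamma> :: real
  assumes "1 \<le> u" "1 \<le> v" "\<alpha> \<le> 0" "\<beta> \<le> 0" "\<alpha> + \<beta> \<le> \<gamma>"
  shows "u powr \<alpha> * v powr \<beta> \<le> u powr \<gamma> + v powr \<gamma>"
proof -
  have "u powr \<alpha> * v powr \<beta> \<le> (min u v) powr (\<alpha> + \<beta>)"
    using assms by (auto simp: min_def powr_add intro: mult_mono powr_mono2')
  also have "\<dots> \<le> (min u v) powr \<gamma>"
    using assms by (intro powr_mono) auto
  also have "\<dots> \<le> u powr \<gamma> + v powr \<gamma>"
    by (simp add: min_def)
  finally show ?thesis .
qed

lemma sum_le_sum_inj_on:
  fixes f :: "'a \<Rightarrow> real" and F :: "'b \<Rightarrow> real"
  assumes "finite T" "inj_on g S" "g ` S \<subseteq> T"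
    and "\<And>s. s \<in> S \<Longrightarrow> f s \<le> F (g s)" and "\<And>t. t \<in> T \<Longrightarrow> 0 \<le> F t"
  shows "sum f S \<le> sum F T"
proof (cases "finite S")
  case True
  have "sum f S \<le> sum (F \<circ> g) S"
    using assms(4) by (intro sum_mono) auto
  also have "\<dots> = sum F (g ` S)"
    by (simp add: sum.reindex[OF assms(2)])
  also have "\<dots> \<le> sum F T"
    using assms by (intro sum_mono2) auto
  finally show ?thesis .
next
  case False
  then show ?thesis
    using assms by (simp add: sum_nonneg)
qed

lemma mult_le_subset_atMost:
  fixes j N :: nat
  assumes "1 \<le> j"
  shows "{x. j * x \<le> N} \<subseteq> {..N}"
proof
  fix x assume "x \<in> {x. j * x \<le> N}"
  moreover have "x \<le> j * x"
    using assms by simp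
  ultimately show "x \<in> {..N}"
    by (metis atMost_iff le_trans mem_Collect_eq)
qed

lemma convolution_term_le:
  fixes a e :: real and j x N :: nat
  assumes "0 \<le> a" "1 \<le> j" "j * x \<le> N"
  shows "(real x + 1) powr (-a) * (real (N - j * x) + 1) powr e
    \<le> 2 powr \<bar>e\<bar> * (real N + 1) powr e * (real x + 1) powr (-a)
      + (2 * real j) powr a * (real N + 1) powr (-a) * (real (N - j * x) + 1) powr e"
proof (cases "2 * j * x \<le> N")
  case True
  then have "real (2 * j * x) \<le> real N"
    by (simp only: of_nat_le_iff)
  then have "real N + 1 \<le> 2 * (real (N - j * x) + 1)"
    using assms(3) by (simp add: of_nat_diff)
  then have "(real (N - j * x) + 1) powr e \<le> 2 powr \<bar>e\<bar> * (real N + 1) powr e"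
    by (intro powr_le_of_le_double) auto
  then have "(real x + 1) powr (-a) * (real (N - j * x) + 1) powr e
      \<le> 2 powr \<bar>e\<bar> * (real N + 1) powr e * (real x + 1) powr (-a)"
    using mult_left_mono[of _ _ "(real x + 1) powr (-a)"] by (simp add: mult_ac)
  then show ?thesis
    by (rule add_increasing2[rotated]) simp
next
  case False
  then have "N + 1 \<le> 2 * j * x + 2 * j"
    using assms(2) by linarith
  then have "real (N + 1) \<le> real (2 * j * x + 2 * j)"
    by (simp only: of_nat_le_iff)
  then have "real N + 1 \<le> 2 * real j * (real x + 1)"
    by (simp add: distrib_left)
  then have "(real N + 1) / (2 * real j) \<le> real x + 1"
    using assms(2) by (simp add: divide_le_eq mult.commute)
  then have "(real x + 1) powr (-a) \<le> ((real N + 1) / (2 * real j)) powr (-a)"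
    using assms by (intro powr_mono2') auto
  also have "\<dots> = (2 * real j) powr a * (real N + 1) powr (-a)"
    using assms(2) by (simp add: powr_divide powr_minus field_simps)
  finally have "(real x + 1) powr (-a) * (real (N - j * x) + 1) powr e
      \<le> (2 * real j) powr a * (real N + 1) powr (-a) * (real (N - j * x) + 1) powr e"
    by (rule mult_right_mono) simp
  then show ?thesis
    by (rule add_increasing[rotated]) simp
qed

lemma convolution_powr_le:
  fixes a e :: real and j N :: nat
  assumes a: "0 \<le> a" "a < 1" and e: "-1 < e" and j: "1 \<le> j"
  shows "(\<Sum>x | j * x \<le> N. (real x + 1) powr (-a) * (real (N - j * x) + 1) powr e)
    \<le> (2 powr \<bar>e\<bar> * (1 + 1 / (1 - a)) + (2 * real j) powr a * (1 + 1 / (1 + e)))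
        * (real N + 1) powr (1 - a + e)"
proof -
  let ?S = "{x. j * x \<le> N}"
  let ?A = "2 powr \<bar>e\<bar> * (real N + 1) powr e"
  let ?B = "(2 * real j) powr a * (real N + 1) powr (-a)"
  note S = mult_le_subset_atMost[OF j, of N]
  have sum1: "(\<Sum>x\<in>?S. (real x + 1) powr (-a)) \<le> (1 + 1 / (1 - a)) * (real N + 1) powr (1 - a)"
    using sum_mono2[OF _ S, of "\<lambda>x. (real x + 1) powr (-a)"] sum_powr_le[of "-a" N] a by simp
  have "(\<Sum>x\<in>?S. (real (N - j * x) + 1) powr e) \<le> (\<Sum>y\<le>N. (real y + 1) powr e)"
  proof (rule sum_le_sum_inj_on[where g = "\<lambda>x. N - j * x"])
    show "inj_on (\<lambda>x. N - j * x) ?S"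
    proof (rule inj_onI)
      fix x y assume "x \<in> ?S" "y \<in> ?S" "N - j * x = N - j * y"
      then have "j * x = j * y"
        by (metis diff_diff_cancel mem_Collect_eq)
      then show "x = y"
        using j by simp
    qed
  qed auto
  with sum_powr_le[OF e, of N]
  have sum2: "(\<Sum>x\<in>?S. (real (N - j * x) + 1) powr e) \<le> (1 + 1 / (1 + e)) * (real N + 1) powr (1 + e)"
    by linarith
  have "(\<Sum>x\<in>?S. (real x + 1) powr (-a) * (real (N - j * x) + 1) powr e)
      \<le> (\<Sum>x\<in>?S. ?A * (real x + 1) powr (-a) + ?B * (real (N - j * x) + 1) powr e)"
    using convolution_term_le[OF a(1) j] by (intro sum_mono) (simp add: mult.assoc)
  also have "\<dots> = ?A * (\<Sum>x\<in>?S. (real x + 1) powr (-a)) + ?B * (\<Sum>x\<in>?S. (real (N - j * x) + 1) powr e)"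
    by (simp add: sum.distrib sum_distrib_left)
  also have "\<dots> \<le> ?A * ((1 + 1 / (1 - a)) * (real N + 1) powr (1 - a))
      + ?B * ((1 + 1 / (1 + e)) * (real N + 1) powr (1 + e))"
    using sum1 sum2 by (intro add_mono mult_left_mono) auto
  also have "\<dots> = 2 powr \<bar>e\<bar> * (1 + 1 / (1 - a)) * ((real N + 1) powr e * (real N + 1) powr (1 - a))
      + (2 * real j) powr a * (1 + 1 / (1 + e)) * ((real N + 1) powr (-a) * (real N + 1) powr (1 + e))"
    by (simp only: mult_ac)
  also have "\<dots> = (2 powr \<bar>e\<bar> * (1 + 1 / (1 - a)) + (2 * real j) powr a * (1 + 1 / (1 + e)))
        * (real N + 1) powr (1 - a + e)"
    by (simp add: distrib_right algebra_simps flip: powr_add)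
  finally show ?thesis .
qed

definition mset_restrict :: "'a multiset \<Rightarrow> 'a set \<Rightarrow> 'a multiset" where
  "mset_restrict M A = filter_mset (\<lambda>x. x \<in> A) M"

lemma count_mset_restrict [simp]:
  "count (mset_restrict M A) x = (if x \<in> A then count M x else 0)"
  by (simp add: mset_restrict_def)

lemma set_mset_mset_restrict [simp]: "set_mset (mset_restrict M A) = set_mset M \<inter> A"
  by (auto simp: mset_restrict_def)

lemma mset_restrict_add_Compl: "mset_restrict M A + mset_restrict M (- A) = M"
  by (rule multiset_eqI) simp

lemma mset_restrict_insert:
  "x \<notin> A \<Longrightarrow> mset_restrict M (insert x A) = replicate_mset (count M x) x + mset_restrict M A"
  by (rule multiset_eqI) auto

lemma mset_restrict_Compl_singleton_add:
  "mset_restrict M (- {x}) + replicate_mset (count M x) x = M"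
  by (rule multiset_eqI) simp

lemma sum_mset_restrict_Compl:
  fixes M :: "nat multiset"
  shows "sum_mset M = sum_mset (mset_restrict M A) + sum_mset (mset_restrict M (- A))"
  by (subst mset_restrict_add_Compl[symmetric, of M A]) (simp only: sum_mset.union)

lemma sum_mset_restrict_singleton [simp]:
  "sum_mset (mset_restrict M {x}) = count M x * (x :: nat)"
  by (simp add: mset_restrict_insert)

lemma mset_restrict_Compl_pair_add:
  "t \<noteq> s \<Longrightarrow> mset_restrict M (- {t, s}) + replicate_mset (count M t) t + replicate_mset (count M s) s = M"
  by (rule multiset_eqI) auto

lemma sum_mset_restrict_Compl_pair:
  "t \<noteq> s \<Longrightarrow> sum_mset M = sum_mset (mset_restrict M (- {t, s})) + count M t * t + count M s * (s :: nat)"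
  by (subst (1) mset_restrict_Compl_pair_add[symmetric, of t s M]) (simp_all add: sum_mset.union)

lemma in_mset_le_sum_mset: "x \<in># M \<Longrightarrow> x \<le> sum_mset (M :: nat multiset)"
  by (metis le_add1 multi_member_split sum_mset.add_mset)

lemma
  fixes B :: nat
  assumes "finite T"
  shows finite_msets_with_support: "finite {M. set_mset M = T \<and> (\<forall>x. count M x \<le> B)}"
    and card_msets_with_support_le: "card {M. set_mset M = T \<and> (\<forall>x. count M x \<le> B)} \<le> B ^ card T"
proof -
  let ?S = "{M. set_mset M = T \<and> (\<forall>x. count M x \<le> B)}"
  have inj: "inj_on (\<lambda>M. restrict (count M) T) ?S"
  proof (rule inj_onI, rule multiset_eqI)
    fix M N x
    assume "M \<in> ?S" "N \<in> ?S" and eq: "restrict (count M) T = restrict (count N) T"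
    show "count M x = count N x"
    proof (cases "x \<in> T")
      case True
      then show ?thesis
        using fun_cong[OF eq, of x] by simp
    next
      case False
      then show ?thesis
        using \<open>M \<in> ?S\<close> \<open>N \<in> ?S\<close> by (metis (mono_tags) count_eq_zero_iff mem_Collect_eq)
    qed
  qed
  have sub: "(\<lambda>M. restrict (count M) T) ` ?S \<subseteq> PiE T (\<lambda>_. {1..B})"
    by (auto simp: Suc_le_eq)
  have fin: "finite (PiE T (\<lambda>_. {1..B}))"
    using assms by (intro finite_PiE) auto
  show "finite ?S"
    using finite_imageD[OF finite_subset[OF sub fin] inj] .
  have "card ?S \<le> card (PiE T (\<lambda>_. {1..B}))"
    using inj sub fin by (rule card_inj_on_le)
  then show "card ?S \<le> B ^ card T"
    using assms by (simp add: card_PiE)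
qed

lemma finite_msets_bounded_support:
  assumes "finite A"
  shows "finite {M. set_mset M \<subseteq> A \<and> (\<forall>x. count M x \<le> B)}"
proof -
  have "finite (\<Union>T\<in>Pow A. {M. set_mset M = T \<and> (\<forall>x. count M x \<le> B)})"
    using assms by (intro finite_UN_I finite_msets_with_support) (auto dest: rev_finite_subset)
  then show ?thesis
    by (rule finite_subset[rotated]) blast
qed

section \<open>Weighted sums over multisets with bounded multiplicities\<close>

definition weight :: "real \<Rightarrow> nat \<Rightarrow> real" where
  "weight a x = (real x + 1) powr (-a)"

abbreviation set_weight :: "real \<Rightarrow> nat set \<Rightarrow> real" where
  "set_weight a A \<equiv> \<Prod>x\<in>A. weight a x"

lemma weight_nonneg [simp]: "0 \<le> weight a x"
  by (simp add: weight_def)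

lemma set_weight_nonneg [simp]: "0 \<le> set_weight a A"
  by (simp add: prod_nonneg)

lemma weight_le_1: "0 \<le> a \<Longrightarrow> weight a x \<le> 1"
  using powr_mono2'[of "-a" 1 "real x + 1"] by (simp add: weight_def)

definition bounded_msets :: "nat \<Rightarrow> nat \<Rightarrow> nat \<Rightarrow> nat multiset set" where
  "bounded_msets B N r = {M. (\<forall>x. count M x \<le> B) \<and> card (set_mset M) = r \<and> sum_mset M \<le> N}"

lemma finite_bounded_msets: "finite (bounded_msets B N r)"
proof (rule finite_subset[OF _ finite_msets_bounded_support[of "{..N}" B]])
  show "bounded_msets B N r \<subseteq> {M. set_mset M \<subseteq> {..N} \<and> (\<forall>x. count M x \<le> B)}"
    by (auto simp: bounded_msets_def dest!: in_mset_le_sum_mset)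
qed simp

lemma bounded_msets_0 [simp]: "bounded_msets B N 0 = {{#}}"
  by (auto simp: bounded_msets_def)

lemma mset_restrict_Compl_singleton_in_bounded_msets:
  assumes "M \<in> bounded_msets B N (Suc r)" "x \<in># M"
  shows "count M x * x \<le> N"
    and "mset_restrict M (- {x}) \<in> bounded_msets B (N - count M x * x) r"
proof -
  have sum: "sum_mset M = count M x * x + sum_mset (mset_restrict M (- {x}))"
    using sum_mset_restrict_Compl[of M "{x}"] by simp
  then show "count M x * x \<le> N"
    using assms(1) by (simp add: bounded_msets_def)
  have "card (set_mset M - {x}) = r"
    using assms by (simp add: bounded_msets_def)
  then show "mset_restrict M (- {x}) \<in> bounded_msets B (N - count M x * x) r"
    using assms(1) sum by (auto simp: bounded_msets_def Diff_eq)
qed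

definition slack_sum :: "nat \<Rightarrow> real \<Rightarrow> nat \<Rightarrow> nat \<Rightarrow> real \<Rightarrow> real" where
  "slack_sum B a N r g =
     (\<Sum>M\<in>bounded_msets B N r. set_weight a (set_mset M) * (real (N - sum_mset M) + 1) powr g)"

lemma slack_sum_Suc_le:
  assumes "1 \<le> B"
  shows "slack_sum B a N (Suc r) g
    \<le> (\<Sum>j\<in>{1..B}. \<Sum>x | j * x \<le> N. weight a x * slack_sum B a (N - j * x) r g)"
proof -
  let ?f = "\<lambda>M. set_weight a (set_mset M) * (real (N - sum_mset M) + 1) powr g"
  let ?D = "bounded_msets B N (Suc r)"
  let ?T = "SIGMA j:{1..B}. SIGMA x:{x. j * x \<le> N}. bounded_msets B (N - j * x) r"
  let ?F = "\<lambda>(j, x, M'). weight a x * (set_weight a (set_mset M') * (real (N - j * x - sum_mset M') + 1) powr g)"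
  let ?G = "\<lambda>(M, x). (count M x, x, mset_restrict M (- {x}))"
  have fin_x: "finite {x. j * x \<le> N}" if "1 \<le> j" for j
    using mult_le_subset_atMost[OF that] by (rule finite_subset) simp
  have fin_T: "finite ?T"
    using fin_x by (auto intro!: finite_SigmaI finite_bounded_msets)
  have "slack_sum B a N (Suc r) g \<le> (\<Sum>M\<in>?D. \<Sum>x\<in>set_mset M. ?f M)"
    unfolding slack_sum_def
    by (intro sum_mono) (auto simp: bounded_msets_def mult_le_cancel_right1 algebra_simps)
  also have "\<dots> = (\<Sum>(M, x)\<in>Sigma ?D set_mset. ?f M)"
    by (rule sum.Sigma) (auto simp: finite_bounded_msets)
  also have "\<dots> \<le> sum ?F ?T"
  proof (rule sum_le_sum_inj_on[where g = ?G])
    show "inj_on ?G (Sigma ?D set_mset)"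
      by (rule inj_onI) (clarsimp, metis mset_restrict_Compl_singleton_add)
    show "?G ` Sigma ?D set_mset \<subseteq> ?T"
    proof (rule image_subsetI)
      fix p assume "p \<in> Sigma ?D set_mset"
      then obtain M x where p: "p = (M, x)" and M: "M \<in> ?D" and x: "x \<in># M"
        by auto
      then have "1 \<le> count M x" "count M x \<le> B"
        by (auto simp: bounded_msets_def Suc_le_eq)
      then show "?G p \<in> ?T"
        using mset_restrict_Compl_singleton_in_bounded_msets[OF M x] by (simp add: p)
    qed
    show "(\<lambda>(M, x). ?f M) p \<le> ?F (?G p)" if p_in: "p \<in> Sigma ?D set_mset" for p
    proof -
      obtain M x where p: "p = (M, x)" and x: "x \<in># M"
        using p_in by auto
      have "set_weight a (set_mset M) = weight a x * set_weight a (set_mset M - {x})"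
        using x by (simp add: prod.remove)
      moreover have "N - sum_mset M = N - count M x * x - sum_mset (mset_restrict M (- {x}))"
        using sum_mset_restrict_Compl[of M "{x}"] by simp
      ultimately show ?thesis
        by (simp add: p Diff_eq mult.assoc)
    qed
  qed (use fin_T in auto)
  also have "\<dots> = (\<Sum>j\<in>{1..B}. \<Sum>x | j * x \<le> N. \<Sum>M'\<in>bounded_msets B (N - j * x) r. ?F (j, x, M'))"
    using fin_x by (simp add: sum.Sigma finite_bounded_msets)
  also have "\<dots> = (\<Sum>j\<in>{1..B}. \<Sum>x | j * x \<le> N. weight a x * slack_sum B a (N - j * x) r g)"
    by (simp add: slack_sum_def sum_distrib_left)
  finally show ?thesis .
qed

lemma slack_sum_bound:
  assumes a: "0 < a" "a < 1" and B: "1 \<le> B" and g: "-1 < g"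
  shows "\<exists>K\<ge>0. \<forall>N. slack_sum B a N r g \<le> K * (real N + 1) powr (real r * (1 - a) + g)"
proof (induction r)
  case 0
  show ?case
    by (intro exI[of _ 1]) (simp add: slack_sum_def)
next
  case (Suc r)
  then obtain K where K: "0 \<le> K" "\<And>N. slack_sum B a N r g \<le> K * (real N + 1) powr (real r * (1 - a) + g)"
    by blast
  define e where "e = real r * (1 - a) + g"
  have e: "-1 < e"
    unfolding e_def using a g by (simp add: add_strict_increasing2)
  define C where "C j = 2 powr \<bar>e\<bar> * (1 + 1 / (1 - a)) + (2 * real j) powr a * (1 + 1 / (1 + e))" for j :: nat
  show ?case
  proof (intro exI[of _ "K * (\<Sum>j\<in>{1..B}. C j)"] conjI allI)
    show "0 \<le> K * (\<Sum>j\<in>{1..B}. C j)"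
      using K e a by (intro mult_nonneg_nonneg sum_nonneg) (auto simp: C_def)
    fix N
    have "slack_sum B a N (Suc r) g \<le> (\<Sum>j\<in>{1..B}. \<Sum>x | j * x \<le> N. weight a x * slack_sum B a (N - j * x) r g)"
      by (rule slack_sum_Suc_le[OF B])
    also have "\<dots> \<le> (\<Sum>j\<in>{1..B}. K * (\<Sum>x | j * x \<le> N. (real x + 1) powr (-a) * (real (N - j * x) + 1) powr e))"
      unfolding sum_distrib_left
    proof (intro sum_mono)
      fix j x
      have "weight a x * slack_sum B a (N - j * x) r g \<le> weight a x * (K * (real (N - j * x) + 1) powr e)"
        using K(2)[of "N - j * x"] by (intro mult_left_mono) (auto simp: e_def)
      then show "weight a x * slack_sum B a (N - j * x) r g
          \<le> K * ((real x + 1) powr (-a) * (real (N - j * x) + 1) powr e)"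
        by (simp add: weight_def mult_ac)
    qed
    also have "\<dots> \<le> (\<Sum>j\<in>{1..B}. K * (C j * (real N + 1) powr (1 - a + e)))"
      using convolution_powr_le[of a e] a e K by (intro sum_mono mult_left_mono) (auto simp: C_def)
    also have "\<dots> = K * (\<Sum>j\<in>{1..B}. C j) * (real N + 1) powr (real (Suc r) * (1 - a) + g)"
      by (simp add: e_def sum_distrib_left sum_distrib_right mult.assoc algebra_simps)
    finally show "slack_sum B a N (Suc r) g
        \<le> K * (\<Sum>j\<in>{1..B}. C j) * (real N + 1) powr (real (Suc r) * (1 - a) + g)" .
  qed
qed

definition exact_msets :: "nat \<Rightarrow> nat \<Rightarrow> nat \<Rightarrow> nat multiset set" where
  "exact_msets B N r = {M \<in> bounded_msets B N r. sum_mset M = N}"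

lemma finite_exact_msets: "finite (exact_msets B N r)"
  unfolding exact_msets_def using finite_bounded_msets by simp

definition exact_sum :: "nat \<Rightarrow> real \<Rightarrow> nat \<Rightarrow> nat \<Rightarrow> real" where
  "exact_sum B a N r = (\<Sum>M\<in>exact_msets B N r. set_weight a (set_mset M))"

lemma exact_sum_nonneg: "0 \<le> exact_sum B a N r"
  unfolding exact_sum_def by (intro sum_nonneg) auto

lemma exact_sum_le_slack_sum: "exact_sum B a N r \<le> slack_sum B a N r g"
proof -
  have "exact_sum B a N r
      = (\<Sum>M\<in>exact_msets B N r. set_weight a (set_mset M) * (real (N - sum_mset M) + 1) powr g)"
    unfolding exact_sum_def by (rule sum.cong) (auto simp: exact_msets_def)
  also have "\<dots> \<le> slack_sum B a N r g"
    unfolding slack_sum_def by (rule sum_mono2) (auto simp: finite_bounded_msets exact_msets_def)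
  finally show ?thesis .
qed

lemma exact_sum_bound:
  assumes "0 < a" "a < 1" "1 \<le> B" "0 < d"
  shows "\<exists>K\<ge>0. \<forall>N. exact_sum B a N r \<le> K * (real N + 1) powr (real r * (1 - a) - 1 + d)"
proof -
  obtain K where "0 \<le> K" "\<And>N. slack_sum B a N r (d - 1) \<le> K * (real N + 1) powr (real r * (1 - a) + (d - 1))"
    using slack_sum_bound[OF assms(1-3), of "d - 1" r] assms(4) by auto
  then show ?thesis
    using exact_sum_le_slack_sum[of B a _ r "d - 1"] by (intro exI[of _ K]) (auto simp: algebra_simps intro: order_trans)
qed

lemma sum_same_support_pairs_snd_le:
  fixes f :: "nat multiset \<Rightarrow> real"
  assumes "finite X" "finite Y" "\<And>q. q \<in> Y \<Longrightarrow> card (set_mset q) = r"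
    and "\<And>p x. p \<in> X \<Longrightarrow> count p x \<le> B" and "\<And>q. 0 \<le> f q"
  shows "(\<Sum>(p, q) | p \<in> X \<and> q \<in> Y \<and> set_mset p = set_mset q. f q) \<le> real (B ^ r) * (\<Sum>q\<in>Y. f q)"
proof -
  have "(\<Sum>(p, q) | p \<in> X \<and> q \<in> Y \<and> set_mset p = set_mset q. f q)
      \<le> (\<Sum>(q, p)\<in>(SIGMA q:Y. {p\<in>X. set_mset p = set_mset q}). f q)"
    by (rule sum_le_sum_inj_on[where g = "\<lambda>(p, q). (q, p)"]) (use assms in \<open>auto simp: inj_on_def\<close>)
  also have "\<dots> = (\<Sum>q\<in>Y. real (card {p\<in>X. set_mset p = set_mset q}) * f q)"
    using assms(1,2) by (simp add: sum.Sigma[symmetric])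
  also have "\<dots> \<le> (\<Sum>q\<in>Y. real (B ^ r) * f q)"
  proof (intro sum_mono mult_right_mono)
    fix q assume q: "q \<in> Y"
    have "{p\<in>X. set_mset p = set_mset q} \<subseteq> {M. set_mset M = set_mset q \<and> (\<forall>x. count M x \<le> B)}"
      using assms(4) by auto
    then have "card {p\<in>X. set_mset p = set_mset q} \<le> card {M. set_mset M = set_mset q \<and> (\<forall>x. count M x \<le> B)}"
      by (intro card_mono finite_msets_with_support) auto
    also have "\<dots> \<le> B ^ r"
      using card_msets_with_support_le[of "set_mset q" B] assms(3)[OF q] by simp
    finally show "real (card {p\<in>X. set_mset p = set_mset q}) \<le> real (B ^ r)"
      by simp
  qed (use assms in auto)
  also have "\<dots> = real (B ^ r) * (\<Sum>q\<in>Y. f q)"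
    by (simp add: sum_distrib_left)
  finally show ?thesis .
qed

lemma sum_same_support_pairs_fst_le:
  fixes f :: "nat multiset \<Rightarrow> real"
  assumes "finite X" "finite Y" "\<And>p. p \<in> X \<Longrightarrow> card (set_mset p) = r"
    and "\<And>q x. q \<in> Y \<Longrightarrow> count q x \<le> B" and "\<And>p. 0 \<le> f p"
  shows "(\<Sum>(p, q) | p \<in> X \<and> q \<in> Y \<and> set_mset p = set_mset q. f p) \<le> real (B ^ r) * (\<Sum>p\<in>X. f p)"
proof -
  have "(\<Sum>(p, q) | p \<in> X \<and> q \<in> Y \<and> set_mset p = set_mset q. f p)
      = (\<Sum>(q, p) | q \<in> Y \<and> p \<in> X \<and> set_mset q = set_mset p. f p)"
    by (rule sum.reindex_bij_witness[where i = "\<lambda>(q, p). (p, q)" and j = "\<lambda>(p, q). (q, p)"]) auto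
  also have "\<dots> \<le> real (B ^ r) * (\<Sum>p\<in>X. f p)"
    by (rule sum_same_support_pairs_snd_le) (use assms in auto)
  finally show ?thesis .
qed

section \<open>Pairs of overlapping representing multisets\<close>

text \<open>The multiset with \<open>b\<^sub>i\<close> copies of \<open>k\<^sub>i\<close> represents the set \<open>{k\<^sub>1, ..., k\<^sub>h}\<close> in \<open>Sset h b N\<close>.\<close>

definition rep_msets :: "nat \<Rightarrow> nat \<Rightarrow> nat \<Rightarrow> nat multiset set" where
  "rep_msets h B N = {M. sum_mset M = N \<and> size M = B \<and> card (set_mset M) \<le> h}"

definition overlap_pairs :: "nat \<Rightarrow> nat \<Rightarrow> nat \<Rightarrow> nat \<Rightarrow> (nat multiset \<times> nat multiset) set" where
  "overlap_pairs h B N1 N2 = {(M, M'). M \<in> rep_msets h B N1 \<and> M' \<in> rep_msets h B N2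
     \<and> set_mset M \<inter> set_mset M' \<noteq> {} \<and> (N1 = N2 \<longrightarrow> set_mset M \<noteq> set_mset M')}"

definition pair_shape :: "nat multiset \<times> nat multiset \<Rightarrow> nat \<times> nat \<times> nat" where
  "pair_shape p = (card (set_mset (fst p) \<inter> set_mset (snd p)),
     card (set_mset (fst p) - set_mset (snd p)), card (set_mset (snd p) - set_mset (fst p)))"

definition union_weight :: "real \<Rightarrow> nat multiset \<times> nat multiset \<Rightarrow> real" where
  "union_weight a p = set_weight a (set_mset (fst p) \<union> set_mset (snd p))"

definition shape_sum :: "nat \<Rightarrow> nat \<Rightarrow> real \<Rightarrow> nat \<Rightarrow> nat \<Rightarrow> nat \<times> nat \<times> nat \<Rightarrow> real" where
  "shape_sum h B a N1 N2 s = (\<Sum>p | p \<in> overlap_pairs h B N1 N2 \<and> pair_shape p = s. union_weight a p)"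

definition same_support_pairs :: "nat \<Rightarrow> nat \<Rightarrow> nat \<Rightarrow> nat \<Rightarrow> (nat multiset \<times> nat multiset) set" where
  "same_support_pairs B N1 N2 r = {(p, q). p \<in> bounded_msets B N1 r \<and> q \<in> bounded_msets B N2 r
     \<and> set_mset p = set_mset q}"

lemma union_weight_nonneg [simp]: "0 \<le> union_weight a p"
  by (simp add: union_weight_def)

lemma count_le_of_rep_msets: "M \<in> rep_msets h B N \<Longrightarrow> count M x \<le> B"
  using count_le_size[of M x] by (simp add: rep_msets_def)

lemma finite_rep_msets: "finite (rep_msets h B N)"
  by (rule finite_subset[OF _ finite_msets_bounded_support[of "{..N}" B]])
     (auto simp: rep_msets_def count_le_of_rep_msets dest!: in_mset_le_sum_mset)

lemma finite_overlap_pairs: "finite (overlap_pairs h B N1 N2)"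
  by (rule finite_subset[of _ "rep_msets h B N1 \<times> rep_msets h B N2"])
     (auto simp: overlap_pairs_def finite_rep_msets)

lemma finite_same_support_pairs: "finite (same_support_pairs B N1 N2 r)"
  by (rule finite_subset[of _ "bounded_msets B N1 r \<times> bounded_msets B N2 r"])
     (auto simp: same_support_pairs_def finite_bounded_msets)

lemma mset_restrict_in_bounded_msets:
  assumes "M \<in> rep_msets h B N" "card (set_mset M \<inter> A) = r"
  shows "mset_restrict M A \<in> bounded_msets B N r"
  using assms count_le_of_rep_msets[OF assms(1)] sum_mset_restrict_Compl[of M A]
  by (auto simp: bounded_msets_def rep_msets_def le_diff_conv)

lemma mset_restrict_Compl_in_exact_msets:
  assumes "M \<in> rep_msets h B N" "card (set_mset M - A) = r"
  shows "mset_restrict M (- A) \<in> exact_msets B (N - sum_mset (mset_restrict M A)) r"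
  using assms count_le_of_rep_msets[OF assms(1)] sum_mset_restrict_Compl[of M A]
  by (auto simp: exact_msets_def bounded_msets_def rep_msets_def Diff_eq)

definition split_sum :: "nat \<Rightarrow> real \<Rightarrow> nat \<Rightarrow> nat \<Rightarrow> nat \<Rightarrow> nat \<Rightarrow> nat \<Rightarrow> real" where
  "split_sum B a N1 N2 rc ra rb = (\<Sum>(p, q)\<in>same_support_pairs B N1 N2 rc.
     set_weight a (set_mset p) * (exact_sum B a (N1 - sum_mset p) ra * exact_sum B a (N2 - sum_mset q) rb))"

lemma set_weight_Un_split:
  assumes "finite S" "finite S'"
  shows "set_weight a (S \<union> S') = set_weight a (S \<inter> S') * (set_weight a (S - S') * set_weight a (S' - S))"
proof -
  have "set_weight a ((S \<inter> S') \<union> ((S - S') \<union> (S' - S)))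
      = set_weight a (S \<inter> S') * set_weight a ((S - S') \<union> (S' - S))"
    by (rule prod.union_disjoint) (use assms in auto)
  also have "set_weight a ((S - S') \<union> (S' - S)) = set_weight a (S - S') * set_weight a (S' - S)"
    by (rule prod.union_disjoint) (use assms in auto)
  also have "(S \<inter> S') \<union> ((S - S') \<union> (S' - S)) = S \<union> S'"
    by blast
  finally show ?thesis .
qed

lemma sum_cartesian_product_mult:
  fixes c :: "'a :: comm_semiring_1"
  shows "(\<Sum>(u, v)\<in>A \<times> A'. c * (f u * g v)) = c * (sum f A * sum g A')"
proof -
  have "(\<Sum>(u, v)\<in>A \<times> A'. c * (f u * g v)) = (\<Sum>u\<in>A. \<Sum>v\<in>A'. c * (f u * g v))"
    by (rule sum.cartesian_product[symmetric])
  also have "\<dots> = c * (sum f A * sum g A')"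
    by (subst sum_product) (simp add: sum_distrib_left)
  finally show ?thesis .
qed

lemma shape_sum_le_split_sum: "shape_sum h B a N1 N2 (rc, ra, rb) \<le> split_sum B a N1 N2 rc ra rb"
proof -
  let ?P = "{p \<in> overlap_pairs h B N1 N2. pair_shape p = (rc, ra, rb)}"
  let ?U = "\<lambda>(p, q). exact_msets B (N1 - sum_mset p) ra \<times> exact_msets B (N2 - sum_mset q) rb"
  let ?F = "\<lambda>((p, q), (u, v)). set_weight a (set_mset p) * (set_weight a (set_mset u) * set_weight a (set_mset v))"
  let ?G = "\<lambda>(M, M'). ((mset_restrict M (set_mset M'), mset_restrict M' (set_mset M)),
     (mset_restrict M (- set_mset M'), mset_restrict M' (- set_mset M)))"
  have inner: "(\<Sum>(u, v)\<in>?U (p, q). ?F ((p, q), (u, v)))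
      = set_weight a (set_mset p) * (exact_sum B a (N1 - sum_mset p) ra * exact_sum B a (N2 - sum_mset q) rb)"
    for p q
    unfolding exact_sum_def by (simp add: sum_cartesian_product_mult)
  have "shape_sum h B a N1 N2 (rc, ra, rb) \<le> sum ?F (Sigma (same_support_pairs B N1 N2 rc) ?U)"
    unfolding shape_sum_def
  proof (rule sum_le_sum_inj_on[where g = ?G])
    show "inj_on ?G ?P"
      by (rule inj_onI) (clarsimp, metis mset_restrict_add_Compl)
    show "?G ` ?P \<subseteq> Sigma (same_support_pairs B N1 N2 rc) ?U"
    proof (rule image_subsetI)
      fix p assume "p \<in> ?P"
      then obtain M M' where p: "p = (M, M')" and M: "M \<in> rep_msets h B N1" and M': "M' \<in> rep_msets h B N2"
        and shape: "card (set_mset M \<inter> set_mset M') = rc" "card (set_mset M - set_mset M') = ra"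
          "card (set_mset M' - set_mset M) = rb"
        by (auto simp: overlap_pairs_def pair_shape_def)
      show "?G p \<in> Sigma (same_support_pairs B N1 N2 rc) ?U"
        using mset_restrict_in_bounded_msets[OF M shape(1)]
          mset_restrict_in_bounded_msets[OF M', of "set_mset M" rc]
          mset_restrict_Compl_in_exact_msets[OF M shape(2)]
          mset_restrict_Compl_in_exact_msets[OF M' shape(3)] shape(1)
        by (auto simp: p same_support_pairs_def Int_commute)
    qed
    show "union_weight a p \<le> ?F (?G p)" for p
      by (cases p) (simp add: union_weight_def set_weight_Un_split Int_commute Diff_eq)
  qed (auto simp: finite_same_support_pairs finite_exact_msets intro!: mult_nonneg_nonneg)
  also have "\<dots> = (\<Sum>(p, q)\<in>same_support_pairs B N1 N2 rc. \<Sum>(u, v)\<in>?U (p, q). ?F ((p, q), (u, v)))"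
    by (subst sum.Sigma[symmetric]) (auto simp: finite_same_support_pairs finite_exact_msets case_prod_beta)
  also have "\<dots> = split_sum B a N1 N2 rc ra rb"
    unfolding split_sum_def using inner by (intro sum.cong) auto
  finally show ?thesis .
qed

lemma split_sum_le_slack_sums:
  assumes Ka: "0 \<le> Ka" "\<And>N. exact_sum B a N ra \<le> Ka * (real N + 1) powr \<alpha>"
    and Kb: "0 \<le> Kb" "\<And>N. exact_sum B a N rb \<le> Kb * (real N + 1) powr \<beta>"
    and "\<alpha> \<le> 0" "\<beta> \<le> 0" "\<alpha> + \<beta> \<le> \<gamma>"
  shows "split_sum B a N1 N2 rc ra rb
    \<le> Ka * Kb * real (B ^ rc) * (slack_sum B a N1 rc \<gamma> + slack_sum B a N2 rc \<gamma>)"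
proof -
  let ?f = "\<lambda>N p. set_weight a (set_mset p) * (real (N - sum_mset p) + 1) powr \<gamma>"
  let ?S = "same_support_pairs B N1 N2 rc"
  have "split_sum B a N1 N2 rc ra rb \<le> (\<Sum>(p, q)\<in>?S. Ka * Kb * (?f N1 p + ?f N2 q))"
    unfolding split_sum_def
  proof (rule sum_mono, clarify)
    fix p q assume "(p, q) \<in> ?S"
    then have same: "set_mset p = set_mset q"
      by (simp add: same_support_pairs_def)
    let ?X = "real (N1 - sum_mset p) + 1" and ?Y = "real (N2 - sum_mset q) + 1"
    have "exact_sum B a (N1 - sum_mset p) ra * exact_sum B a (N2 - sum_mset q) rb
        \<le> (Ka * ?X powr \<alpha>) * (Kb * ?Y powr \<beta>)"
      using Ka Kb by (intro mult_mono) (auto simp: exact_sum_nonneg)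
    also have "\<dots> \<le> Ka * Kb * (?X powr \<gamma> + ?Y powr \<gamma>)"
      using Ka Kb assms(5-7) mult_powr_le_powr_add_powr[of ?X ?Y \<alpha> \<beta> \<gamma>]
      by (simp add: mult_ac mult_left_mono)
    finally have "set_weight a (set_mset p) * (exact_sum B a (N1 - sum_mset p) ra * exact_sum B a (N2 - sum_mset q) rb)
        \<le> set_weight a (set_mset p) * (Ka * Kb * (?X powr \<gamma> + ?Y powr \<gamma>))"
      by (intro mult_left_mono) auto
    also have "\<dots> = Ka * Kb * (?f N1 p + ?f N2 q)"
      using same by (simp add: algebra_simps)
    finally show "set_weight a (set_mset p) * (exact_sum B a (N1 - sum_mset p) ra * exact_sum B a (N2 - sum_mset q) rb)
        \<le> Ka * Kb * (?f N1 p + ?f N2 q)" .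
  qed
  also have "\<dots> = Ka * Kb * ((\<Sum>(p, q)\<in>?S. ?f N1 p) + (\<Sum>(p, q)\<in>?S. ?f N2 q))"
    by (subst sum.distrib[symmetric], subst sum_distrib_left) (simp add: case_prod_beta)
  also have "\<dots> \<le> Ka * Kb * (real (B ^ rc) * slack_sum B a N1 rc \<gamma> + real (B ^ rc) * slack_sum B a N2 rc \<gamma>)"
    unfolding same_support_pairs_def slack_sum_def
    by (intro mult_left_mono add_mono sum_same_support_pairs_fst_le sum_same_support_pairs_snd_le)
       (use Ka Kb finite_bounded_msets in \<open>auto simp: bounded_msets_def\<close>)
  finally show ?thesis
    by (simp add: algebra_simps)
qed

lemma split_sum_bound:
  assumes a: "0 < a" "a < 1" and B: "1 \<le> B" and d: "0 < d"
    and \<alpha>: "real ra * (1 - a) - 1 + d \<le> 0" and \<beta>: "real rb * (1 - a) - 1 + d \<le> 0"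
    and \<gamma>: "(real ra * (1 - a) - 1 + d) + (real rb * (1 - a) - 1 + d) \<le> \<gamma>" "d - 1 \<le> \<gamma>"
    and e: "real rc * (1 - a) + \<gamma> \<le> 0"
  shows "\<exists>K\<ge>0. \<forall>N1 N2. N1 \<le> N2 \<longrightarrow>
    split_sum B a N1 N2 rc ra rb \<le> K * (real N1 + 1) powr (real rc * (1 - a) + \<gamma>)"
proof -
  obtain Ka where Ka: "0 \<le> Ka" "\<And>N. exact_sum B a N ra \<le> Ka * (real N + 1) powr (real ra * (1 - a) - 1 + d)"
    using exact_sum_bound[OF a B d] by blast
  obtain Kb where Kb: "0 \<le> Kb" "\<And>N. exact_sum B a N rb \<le> Kb * (real N + 1) powr (real rb * (1 - a) - 1 + d)"
    using exact_sum_bound[OF a B d] by blast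
  obtain Ks where Ks: "0 \<le> Ks" "\<And>N. slack_sum B a N rc \<gamma> \<le> Ks * (real N + 1) powr (real rc * (1 - a) + \<gamma>)"
    using slack_sum_bound[OF a B, of \<gamma> rc] \<gamma>(2) d by auto
  show ?thesis
  proof (intro exI[of _ "2 * Ka * Kb * real (B ^ rc) * Ks"] conjI allI impI)
    fix N1 N2 :: nat assume "N1 \<le> N2"
    then have "(real N2 + 1) powr (real rc * (1 - a) + \<gamma>) \<le> (real N1 + 1) powr (real rc * (1 - a) + \<gamma>)"
      using e by (intro powr_mono2') auto
    then have "slack_sum B a N2 rc \<gamma> \<le> Ks * (real N1 + 1) powr (real rc * (1 - a) + \<gamma>)"
      using Ks(2)[of N2] Ks(1) mult_left_mono by (blast intro: order_trans)
    then have "slack_sum B a N1 rc \<gamma> + slack_sum B a N2 rc \<gamma>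
        \<le> 2 * (Ks * (real N1 + 1) powr (real rc * (1 - a) + \<gamma>))"
      using Ks(2)[of N1] by linarith
    then have "Ka * Kb * real (B ^ rc) * (slack_sum B a N1 rc \<gamma> + slack_sum B a N2 rc \<gamma>)
        \<le> Ka * Kb * real (B ^ rc) * (2 * (Ks * (real N1 + 1) powr (real rc * (1 - a) + \<gamma>)))"
      using Ka Kb by (intro mult_left_mono) auto
    then have "Ka * Kb * real (B ^ rc) * (slack_sum B a N1 rc \<gamma> + slack_sum B a N2 rc \<gamma>)
        \<le> 2 * Ka * Kb * real (B ^ rc) * Ks * (real N1 + 1) powr (real rc * (1 - a) + \<gamma>)"
      by (simp add: mult_ac)
    moreover have "split_sum B a N1 N2 rc ra rb
        \<le> Ka * Kb * real (B ^ rc) * (slack_sum B a N1 rc \<gamma> + slack_sum B a N2 rc \<gamma>)"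
      by (rule split_sum_le_slack_sums[OF Ka Kb \<alpha> \<beta> \<gamma>(1)])
    ultimately show "split_sum B a N1 N2 rc ra rb
        \<le> 2 * Ka * Kb * real (B ^ rc) * Ks * (real N1 + 1) powr (real rc * (1 - a) + \<gamma>)"
      by linarith
  qed (use Ka Kb Ks in auto)
qed

lemma exists_count_cross_product_ne:
  assumes same: "set_mset M = set_mset M'" and size: "size M = size M'" and ne: "M \<noteq> M'"
    and t: "t \<in># M"
  shows "\<exists>s\<in>#M. count M t * count M' s \<noteq> count M s * count M' t"
proof (rule ccontr)
  assume "\<not> ?thesis"
  then have cross: "\<And>s. s \<in># M \<Longrightarrow> count M t * count M' s = count M s * count M' t"
    by blast
  have "count M t * size M' = (\<Sum>s\<in>set_mset M. count M t * count M' s)"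
    by (simp add: size_multiset_overloaded_eq same sum_distrib_left)
  also have "\<dots> = (\<Sum>s\<in>set_mset M. count M s * count M' t)"
    using cross by (intro sum.cong) auto
  also have "\<dots> = size M * count M' t"
    by (simp add: size_multiset_overloaded_eq sum_distrib_right)
  finally have "count M t * size M = size M * count M' t"
    using size by simp
  moreover have "0 < size M"
    using t by (auto simp flip: nonempty_has_size)
  ultimately have eq_t: "count M t = count M' t"
    by (metis mult.commute mult_cancel_left not_gr0)
  have "count M s = count M' s" for s
  proof (cases "s \<in># M")
    case True
    then have "count M t * count M' s = count M t * count M s"
      using cross[OF True] eq_t by (simp add: mult.commute)
    then show ?thesis
      using t by (auto simp: count_eq_zero_iff)
  next
    case False
    then show ?thesis
      using same by (metis count_eq_zero_iff)
  qed
  then show False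
    using ne multiset_eqI by blast
qed

lemma nat_linear_system_unique:
  fixes c1 c2 c3 c4 x y x' y' :: nat
  assumes "c1 * x + c2 * y = c1 * x' + c2 * y'" "c3 * x + c4 * y = c3 * x' + c4 * y'"
    and det: "c1 * c4 \<noteq> c2 * c3"
  shows "x = x' \<and> y = y'"
proof -
  define X where "X = int x - int x'"
  define Y where "Y = int y' - int y"
  have eq1: "int c1 * X = int c2 * Y" and eq2: "int c3 * X = int c4 * Y"
    using assms(1,2)[THEN arg_cong[of _ _ int]] unfolding X_def Y_def by (simp_all add: algebra_simps)
  have "(int c1 * int c4) * X = int c4 * (int c1 * X)"
    by (simp add: mult_ac)
  also have "\<dots> = int c2 * (int c4 * Y)"
    unfolding eq1 by (simp add: mult_ac)
  also have "\<dots> = (int c2 * int c3) * X"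
    unfolding eq2[symmetric] by (simp add: mult_ac)
  finally have X0: "X = 0"
    using det by (metis mult_right_cancel of_nat_eq_iff of_nat_mult)
  have "(int c1 * int c4) * Y = int c1 * (int c3 * X)"
    unfolding eq2 by (simp add: mult_ac)
  moreover have "(int c2 * int c3) * Y = int c3 * (int c1 * X)"
    unfolding eq1 by (simp add: mult_ac)
  ultimately have "Y = 0"
    using X0 det by (metis mult_eq_0_iff of_nat_eq_0_iff of_nat_mult)
  with X0 show ?thesis
    unfolding X_def Y_def by simp
qed

definition two_point_split ::
    "nat \<Rightarrow> nat \<Rightarrow> nat multiset \<times> nat multiset \<Rightarrow> (nat multiset \<times> nat multiset) \<times> nat \<times> nat \<times> nat \<times> nat" where
  "two_point_split t s p = ((mset_restrict (fst p) (- {t, s}), mset_restrict (snd p) (- {t, s})),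
     (count (fst p) t, count (fst p) s, count (snd p) t, count (snd p) s))"

lemma two_point_split_inj:
  fixes M M' L L' :: "nat multiset"
  assumes "t \<noteq> s" "u \<noteq> v" and eq: "two_point_split t s (M, M') = two_point_split u v (L, L')"
    and sums: "sum_mset M = sum_mset L" "sum_mset M' = sum_mset L'"
    and det: "count M t * count M' s \<noteq> count M s * count M' t"
  shows "M = L \<and> M' = L'"
proof -
  have rest: "mset_restrict M (- {t, s}) = mset_restrict L (- {u, v})"
      "mset_restrict M' (- {t, s}) = mset_restrict L' (- {u, v})"
    and counts: "count M t = count L u" "count M s = count L v" "count M' t = count L' u" "count M' s = count L' v"
    using eq by (simp_all add: two_point_split_def)
  have "count M t * t + count M s * s = count M t * u + count M s * v"
    using sums(1) sum_mset_restrict_Compl_pair[OF assms(1), of M] sum_mset_restrict_Compl_pair[OF assms(2), of L]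
      rest(1) counts by simp
  moreover have "count M' t * t + count M' s * s = count M' t * u + count M' s * v"
    using sums(2) sum_mset_restrict_Compl_pair[OF assms(1), of M'] sum_mset_restrict_Compl_pair[OF assms(2), of L']
      rest(2) counts by simp
  ultimately have "t = u \<and> s = v"
    using det by (rule nat_linear_system_unique)
  then show ?thesis
    using mset_restrict_Compl_pair_add[OF assms(1)] mset_restrict_Compl_pair_add[OF assms(2)] rest counts
    by metis
qed

lemma weight_le_of_upper_bound:
  assumes "0 \<le> a" "size M = B" "1 \<le> B" "sum_mset M = N" "\<forall>x\<in>#M. x \<le> t"
  shows "weight a t \<le> real B powr a * (real N + 1) powr (-a)"
proof -
  have "sum_mset M \<le> size M * t"
    using assms(5) by (induction M) auto
  then have "N \<le> B * t"
    using assms(2,4) by simp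
  then have "real N + 1 \<le> real B * (real t + 1)"
    using assms(3) by (simp add: distrib_left flip: of_nat_mult)
  then have "(real N + 1) / real B \<le> real t + 1"
    using assms(3) by (simp add: divide_le_eq mult.commute)
  then have "weight a t \<le> ((real N + 1) / real B) powr (-a)"
    unfolding weight_def using assms by (intro powr_mono2') auto
  also have "\<dots> = real B powr a * (real N + 1) powr (-a)"
    using assms(3) by (simp add: powr_divide powr_minus field_simps)
  finally show ?thesis .
qed

lemma set_weight_le_remove_two:
  assumes "finite A" "t \<in> A" "s \<in> A" "t \<noteq> s" "0 \<le> a"
  shows "set_weight a A \<le> weight a t * set_weight a (A - {t, s})"
proof -
  have "set_weight a A = weight a t * set_weight a (A - {t})"
    using assms by (simp add: prod.remove)
  also have "set_weight a (A - {t}) = weight a s * set_weight a (A - {t} - {s})"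
    using assms by (intro prod.remove) auto
  also have "set_weight a (A - {t} - {s}) = set_weight a (A - {t, s})"
    using Diff_insert2[of A t "{s}"] by simp
  finally have "set_weight a A = weight a t * (weight a s * set_weight a (A - {t, s}))" .
  also have "\<dots> \<le> weight a t * set_weight a (A - {t, s})"
    using weight_le_1[OF assms(5), of s] by (simp add: mult_left_mono mult_left_le_one_le)
  finally show ?thesis .
qed

lemma equal_support_pair_facts:
  assumes "(M, M') \<in> overlap_pairs h B N1 N2" "pair_shape (M, M') = (h, 0, 0)"
  shows "M \<in> rep_msets h B N1" "M' \<in> rep_msets h B N2" "set_mset M' = set_mset M"
    "card (set_mset M) = h" "M \<noteq> M'"
proof -
  show M: "M \<in> rep_msets h B N1" and M': "M' \<in> rep_msets h B N2"
    using assms(1) by (auto simp: overlap_pairs_def)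
  have "set_mset M - set_mset M' = {}" "set_mset M' - set_mset M = {}"
    using assms(2) by (auto simp: pair_shape_def)
  then show same: "set_mset M' = set_mset M"
    by blast
  show "card (set_mset M) = h"
    using assms(2) same by (simp add: pair_shape_def)
  show "M \<noteq> M'"
    using assms(1) M M' by (auto simp: overlap_pairs_def rep_msets_def)
qed

lemma equal_support_pair_points:
  assumes "(M, M') \<in> overlap_pairs h B N1 N2" "pair_shape (M, M') = (h, 0, 0)" "2 \<le> h"
  shows "Max (set_mset M) \<in># M" "\<forall>x\<in>#M. x \<le> Max (set_mset M)"
    and "\<exists>s\<in>#M. count M (Max (set_mset M)) * count M' s \<noteq> count M s * count M' (Max (set_mset M))"
proof -
  note facts = equal_support_pair_facts[OF assms(1,2)]
  have "set_mset M \<noteq> {}"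
    using facts assms(3) by auto
  then show t: "Max (set_mset M) \<in># M" "\<forall>x\<in>#M. x \<le> Max (set_mset M)"
    by simp_all
  show "\<exists>s\<in>#M. count M (Max (set_mset M)) * count M' s \<noteq> count M s * count M' (Max (set_mset M))"
    using facts t by (intro exists_count_cross_product_ne) (auto simp: rep_msets_def)
qed

definition second_point :: "nat multiset \<Rightarrow> nat multiset \<Rightarrow> nat" where
  "second_point M M' = (SOME s. s \<in># M
     \<and> count M (Max (set_mset M)) * count M' s \<noteq> count M s * count M' (Max (set_mset M)))"

lemma second_point:
  assumes "(M, M') \<in> overlap_pairs h B N1 N2" "pair_shape (M, M') = (h, 0, 0)" "2 \<le> h"
  shows "second_point M M' \<in># M" "Max (set_mset M) \<noteq> second_point M M'"
    and "count M (Max (set_mset M)) * count M' (second_point M M')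
      \<noteq> count M (second_point M M') * count M' (Max (set_mset M))"
proof -
  from equal_support_pair_points(3)[OF assms]
  have "\<exists>s. s \<in># M \<and> count M (Max (set_mset M)) * count M' s \<noteq> count M s * count M' (Max (set_mset M))"
    unfolding Bex_def .
  then have "second_point M M' \<in># M \<and> count M (Max (set_mset M)) * count M' (second_point M M')
      \<noteq> count M (second_point M M') * count M' (Max (set_mset M))"
    unfolding second_point_def by (rule someI_ex)
  then show "second_point M M' \<in># M" "Max (set_mset M) \<noteq> second_point M M'"
    "count M (Max (set_mset M)) * count M' (second_point M M')
      \<noteq> count M (second_point M M') * count M' (Max (set_mset M))"
    by (auto simp: mult.commute)
qed

lemma equal_support_union_weight_le:
  assumes "(M, M') \<in> overlap_pairs h B N1 N2" "pair_shape (M, M') = (h, 0, 0)" "2 \<le> h"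
    and "s \<in># M" "Max (set_mset M) \<noteq> s" "0 \<le> a" "1 \<le> B"
  shows "union_weight a (M, M') \<le> real B powr a * (real N1 + 1) powr (-a)
    * set_weight a (set_mset (mset_restrict M (- {Max (set_mset M), s})))"
proof -
  note facts = equal_support_pair_facts[OF assms(1,2)] and t = equal_support_pair_points[OF assms(1-3)]
  have "union_weight a (M, M') \<le> weight a (Max (set_mset M)) * set_weight a (set_mset M - {Max (set_mset M), s})"
    using facts t assms(4-6) by (simp add: union_weight_def set_weight_le_remove_two)
  also have "\<dots> \<le> real B powr a * (real N1 + 1) powr (-a) * set_weight a (set_mset M - {Max (set_mset M), s})"
    using facts(1) t assms(6,7) by (intro mult_right_mono weight_le_of_upper_bound) (auto simp: rep_msets_def)
  finally show ?thesis
    by (simp add: Diff_eq)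
qed

lemma equal_support_split_mem:
  assumes P: "(M, M') \<in> overlap_pairs h B N1 N2" "pair_shape (M, M') = (h, 0, 0)" and h: "2 \<le> h"
    and s: "s \<in># M" "Max (set_mset M) \<noteq> s"
  shows "two_point_split (Max (set_mset M)) s (M, M')
    \<in> same_support_pairs B N1 N2 (h - 2) \<times> ({1..B} \<times> {1..B} \<times> {1..B} \<times> {1..B})"
proof -
  note facts = equal_support_pair_facts[OF P] and t = equal_support_pair_points(1)[OF P h]
  have "card (set_mset M \<inter> - {Max (set_mset M), s}) = h - 2"
    using facts s t by (simp add: Diff_eq[symmetric] card_Diff_subset)
  then have "(mset_restrict M (- {Max (set_mset M), s}), mset_restrict M' (- {Max (set_mset M), s}))
      \<in> same_support_pairs B N1 N2 (h - 2)"
    using facts mset_restrict_in_bounded_msets by (simp add: same_support_pairs_def)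
  then show ?thesis
    using facts s t count_le_of_rep_msets by (auto simp: two_point_split_def Suc_le_eq)
qed

text \<open>
  A pair with equal supports is encoded by removing its largest element \<open>t\<close> and an element \<open>s\<close>
  whose multiplicities are not proportional to those of \<open>t\<close>, and recording the four removed
  multiplicities; the known sums \<open>N1\<close>, \<open>N2\<close> then determine \<open>t\<close> and \<open>s\<close>.
\<close>

lemma equal_support_shape_sum_le:
  assumes a: "0 \<le> a" and B: "1 \<le> B" and h: "2 \<le> h"
  shows "shape_sum h B a N1 N2 (h, 0, 0) \<le> real (B ^ 4) * (real B powr a * (real N1 + 1) powr (-a))
    * (\<Sum>(p, q)\<in>same_support_pairs B N1 N2 (h - 2). set_weight a (set_mset p))"
proof -
  let ?P = "{p \<in> overlap_pairs h B N1 N2. pair_shape p = (h, 0, 0)}"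
  let ?C = "{1..B} \<times> {1..B} \<times> {1..B} \<times> {1..B}"
  define c where "c = real B powr a * (real N1 + 1) powr (-a)"
  define G where "G p = two_point_split (Max (set_mset (fst p))) (second_point (fst p) (snd p)) p" for p
  have P: "(M, M') \<in> overlap_pairs h B N1 N2" "pair_shape (M, M') = (h, 0, 0)" if "(M, M') \<in> ?P" for M M'
    using that by simp_all
  have s: "second_point M M' \<in># M" "Max (set_mset M) \<noteq> second_point M M'"
      "count M (Max (set_mset M)) * count M' (second_point M M')
        \<noteq> count M (second_point M M') * count M' (Max (set_mset M))"
    if "(M, M') \<in> ?P" for M M'
    using second_point[OF P[OF that] h] by simp_all
  have "shape_sum h B a N1 N2 (h, 0, 0)
      \<le> (\<Sum>(pq, k)\<in>same_support_pairs B N1 N2 (h - 2) \<times> ?C. c * set_weight a (set_mset (fst pq)))"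
    unfolding shape_sum_def
  proof (rule sum_le_sum_inj_on[where g = G])
    show "inj_on G ?P"
    proof (rule inj_onI)
      fix p1 p2 assume "p1 \<in> ?P" "p2 \<in> ?P" and eq: "G p1 = G p2"
      obtain M M' L L' where p: "p1 = (M, M')" "p2 = (L, L')"
        by fastforce
      then have PM: "(M, M') \<in> ?P" and PL: "(L, L') \<in> ?P"
        using \<open>p1 \<in> ?P\<close> \<open>p2 \<in> ?P\<close> by simp_all
      have "sum_mset M = sum_mset L" "sum_mset M' = sum_mset L'"
        using PM PL by (auto simp: overlap_pairs_def rep_msets_def)
      then have "M = L \<and> M' = L'"
        using eq s(2,3)[OF PM] s(2)[OF PL] unfolding p G_def
        by (intro two_point_split_inj[where t = "Max (set_mset M)" and s = "second_point M M'"
            and u = "Max (set_mset L)" and v = "second_point L L'"]) simp_all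
      then show "p1 = p2"
        by (simp add: p)
    qed
    show "G ` ?P \<subseteq> same_support_pairs B N1 N2 (h - 2) \<times> ?C"
    proof (rule image_subsetI)
      fix p assume "p \<in> ?P"
      then obtain M M' where p: "p = (M, M')" and PM: "(M, M') \<in> ?P"
        by (cases p) simp
      show "G p \<in> same_support_pairs B N1 N2 (h - 2) \<times> ?C"
        using equal_support_split_mem[OF P[OF PM] h s(1)[OF PM] s(2)[OF PM]] by (simp add: p G_def)
    qed
    show "union_weight a p \<le> (\<lambda>(pq, k). c * set_weight a (set_mset (fst pq))) (G p)" if "p \<in> ?P" for p
    proof -
      obtain M M' where p: "p = (M, M')" and PM: "(M, M') \<in> ?P"
        using \<open>p \<in> ?P\<close> by (cases p) simp
      show ?thesis
        using equal_support_union_weight_le[OF P[OF PM] h s(1)[OF PM] s(2)[OF PM] a B]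
        by (simp add: p G_def c_def two_point_split_def)
    qed
  qed (auto simp: finite_same_support_pairs c_def)
  also have "\<dots> = (\<Sum>pq\<in>same_support_pairs B N1 N2 (h - 2). \<Sum>k\<in>?C. c * set_weight a (set_mset (fst pq)))"
    by (rule sum.cartesian_product[symmetric])
  also have "\<dots> = real (B ^ 4) * c * (\<Sum>(p, q)\<in>same_support_pairs B N1 N2 (h - 2). set_weight a (set_mset p))"
    by (simp add: sum_distrib_left case_prod_beta card_cartesian_product power4_eq_xxxx mult_ac)
  finally show ?thesis
    unfolding c_def .
qed

lemma equal_support_shape_sum_bound:
  assumes a: "0 < a" "a < 1" and B: "1 \<le> B" and h: "2 \<le> h"
  shows "\<exists>K\<ge>0. \<forall>N1 N2. N1 \<le> N2 \<longrightarrow>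
    shape_sum h B a N1 N2 (h, 0, 0) \<le> K * (real N1 + 1) powr (real (h - 1) * (1 - a) - 1)"
proof -
  obtain Ks where Ks: "0 \<le> Ks" "\<And>N. slack_sum B a N (h - 2) 0 \<le> Ks * (real N + 1) powr (real (h - 2) * (1 - a))"
    using slack_sum_bound[OF a B, of 0 "h - 2"] by auto
  define K where "K = real (B ^ 4) * real B powr a * real (B ^ (h - 2)) * Ks"
  show ?thesis
  proof (intro exI[of _ K] conjI allI impI)
    show "0 \<le> K"
      using Ks by (simp add: K_def)
    fix N1 N2
    have "(\<Sum>(p, q)\<in>same_support_pairs B N1 N2 (h - 2). set_weight a (set_mset p))
        \<le> real (B ^ (h - 2)) * (\<Sum>p\<in>bounded_msets B N1 (h - 2). set_weight a (set_mset p))"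
      unfolding same_support_pairs_def
      by (rule sum_same_support_pairs_fst_le) (use finite_bounded_msets in \<open>auto simp: bounded_msets_def\<close>)
    also have "\<dots> = real (B ^ (h - 2)) * slack_sum B a N1 (h - 2) 0"
      by (simp add: slack_sum_def)
    also have "\<dots> \<le> real (B ^ (h - 2)) * (Ks * (real N1 + 1) powr (real (h - 2) * (1 - a)))"
      using Ks by (intro mult_left_mono) auto
    finally have sum_le: "(\<Sum>(p, q)\<in>same_support_pairs B N1 N2 (h - 2). set_weight a (set_mset p))
        \<le> real (B ^ (h - 2)) * (Ks * (real N1 + 1) powr (real (h - 2) * (1 - a)))" .
    have "shape_sum h B a N1 N2 (h, 0, 0) \<le> real (B ^ 4) * (real B powr a * (real N1 + 1) powr (-a))
        * (\<Sum>(p, q)\<in>same_support_pairs B N1 N2 (h - 2). set_weight a (set_mset p))"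
      using equal_support_shape_sum_le a B h by simp
    also have "\<dots> \<le> real (B ^ 4) * (real B powr a * (real N1 + 1) powr (-a))
        * (real (B ^ (h - 2)) * (Ks * (real N1 + 1) powr (real (h - 2) * (1 - a))))"
      using sum_le by (intro mult_left_mono) auto
    also have "\<dots> = K * ((real N1 + 1) powr (-a) * (real N1 + 1) powr (real (h - 2) * (1 - a)))"
      by (simp add: K_def mult_ac)
    also have "\<dots> = K * (real N1 + 1) powr (real (h - 1) * (1 - a) - 1)"
      using h by (simp add: of_nat_diff algebra_simps flip: powr_add)
    finally show "shape_sum h B a N1 N2 (h, 0, 0) \<le> K * (real N1 + 1) powr (real (h - 1) * (1 - a) - 1)" .
  qed
qed

text \<open>
  An overlapping pair has at most \<open>2 h - 1\<close> distinct elements, each costing \<open>1/h + \<delta>\<close> in the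
  exponent; \<open>\<delta> = \<eta> / (2 h + 1)\<close> keeps the total loss below \<open>\<eta>\<close>.
\<close>

lemma exponent_bounds:
  fixes H \<eta> \<delta> k :: real
  assumes H: "2 \<le> H" and \<eta>: "0 < \<eta>" "\<eta> < 1 / H" and \<delta>: "\<delta> = \<eta> / (2 * H + 1)"
  shows "0 < \<delta>" "1 / H + \<delta> < 1"
    and "k \<le> H - 1 \<Longrightarrow> k * (1 / H + \<delta>) - 1 + \<delta> \<le> 0"
    and "k \<le> H - 1 \<Longrightarrow> k * (1 / H + \<delta>) - 1 + \<delta> \<le> -1 / H + \<eta>"
    and "k \<le> 2 * H - 1 \<Longrightarrow> k * (1 / H + \<delta>) - 2 + 2 * \<delta> \<le> -1 / H + \<eta>"
proof -
  have H0: "0 < H"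
    using H by simp
  show \<delta>0: "0 < \<delta>"
    unfolding \<delta> using \<eta> H by simp
  have \<eta>_eq: "\<eta> = (2 * H + 1) * \<delta>"
    unfolding \<delta> using H by simp
  have "H * \<eta> < 1"
    using \<eta> H0 by (simp add: field_simps)
  have "H * \<delta> = H * \<eta> / (2 * H + 1)"
    unfolding \<delta> by simp
  also have "\<dots> \<le> 1 / (2 * H + 1)"
    using \<open>H * \<eta> < 1\<close> H by (intro divide_right_mono) auto
  also have "\<dots> \<le> 1 / H"
    using H0 by (intro divide_left_mono) auto
  finally have H\<delta>: "H * \<delta> \<le> 1 / H" .
  moreover have "2 * \<delta> \<le> H * \<delta>" "1 / H \<le> 1 / 2"
    using H \<delta>0 by (auto intro: mult_right_mono divide_left_mono)
  ultimately show "1 / H + \<delta> < 1"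
    by linarith
  have H\<delta>\<eta>: "H * \<delta> \<le> \<eta>"
    unfolding \<eta>_eq using \<delta>0 H0 by (intro mult_right_mono) auto
  have q1: "(H - 1) * (1 / H + \<delta>) = 1 - 1 / H + H * \<delta> - \<delta>"
    using H0 by (simp add: field_simps)
  have q2: "(2 * H - 1) * (1 / H + \<delta>) = 2 - 1 / H + (2 * H + 1) * \<delta> - 2 * \<delta>"
    using H0 by (simp add: field_simps)
  have mono: "k * (1 / H + \<delta>) \<le> K * (1 / H + \<delta>)" if "k \<le> K" for K
    using that H0 \<delta>0 by (intro mult_right_mono) auto
  show "k * (1 / H + \<delta>) - 1 + \<delta> \<le> 0" if "k \<le> H - 1"
    using mono[OF that] q1 H\<delta> by linarith
  show "k * (1 / H + \<delta>) - 1 + \<delta> \<le> -1 / H + \<eta>" if "k \<le> H - 1"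
    using mono[OF that] q1 H\<delta>\<eta> by linarith
  show "k * (1 / H + \<delta>) - 2 + 2 * \<delta> \<le> -1 / H + \<eta>" if "k \<le> 2 * H - 1"
    using mono[OF that] q2 \<eta>_eq by linarith
qed

lemma pair_shape_bounds:
  assumes "p \<in> overlap_pairs h B N1 N2" "pair_shape p = (rc, ra, rb)"
  shows "1 \<le> rc" "rc + ra \<le> h" "rc + rb \<le> h"
proof -
  obtain M M' where p: "p = (M, M')" and card: "card (set_mset M) \<le> h" "card (set_mset M') \<le> h"
    and meet: "set_mset M \<inter> set_mset M' \<noteq> {}"
    using assms(1) by (auto simp: overlap_pairs_def rep_msets_def)
  have r: "rc = card (set_mset M \<inter> set_mset M')" "ra = card (set_mset M - set_mset M')"
    "rb = card (set_mset M' - set_mset M)"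
    using assms(2) by (simp_all add: p pair_shape_def)
  show "1 \<le> rc"
    using meet by (simp add: r Suc_le_eq card_gt_0_iff)
  show "rc + ra \<le> h"
    using card card_Int_Diff[of "set_mset M" "set_mset M'"] by (simp add: r)
  show "rc + rb \<le> h"
    using card card_Int_Diff[of "set_mset M'" "set_mset M"] by (simp add: r Int_commute)
qed

lemma sum_overlap_pairs_eq_sum_shape_sums:
  "(\<Sum>p\<in>overlap_pairs h B N1 N2. union_weight a p) = (\<Sum>s\<in>{..h} \<times> {..h} \<times> {..h}. shape_sum h B a N1 N2 s)"
proof -
  have "pair_shape ` overlap_pairs h B N1 N2 \<subseteq> {..h} \<times> {..h} \<times> {..h}"
  proof (rule image_subsetI)
    fix p assume p: "p \<in> overlap_pairs h B N1 N2"
    obtain rc ra rb where s: "pair_shape p = (rc, ra, rb)"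
      by (metis prod_cases3)
    then show "pair_shape p \<in> {..h} \<times> {..h} \<times> {..h}"
      using pair_shape_bounds[OF p s] by simp
  qed
  then show ?thesis
    unfolding shape_sum_def by (intro sum.group[symmetric] finite_overlap_pairs) auto
qed

lemma powr_bound_exponent_mono:
  assumes "\<exists>K\<ge>0. \<forall>N1 N2. N1 \<le> N2 \<longrightarrow> f N1 N2 \<le> K * (real N1 + 1) powr e" "e \<le> e'"
  shows "\<exists>K\<ge>0. \<forall>N1 N2. N1 \<le> N2 \<longrightarrow> f N1 N2 \<le> K * (real N1 + 1) powr e'"
proof -
  obtain K where K: "0 \<le> K" "\<And>N1 N2. N1 \<le> N2 \<Longrightarrow> f N1 N2 \<le> K * (real N1 + 1) powr e"
    using assms(1) by blast
  have "K * (real N1 + 1) powr e \<le> K * (real N1 + 1) powr e'" for N1 :: nat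
    using K(1) assms(2) by (intro mult_left_mono powr_mono) auto
  with K show ?thesis
    by (intro exI[of _ K]) (auto intro: order_trans)
qed

lemma split_exponent_le:
  assumes h: "2 \<le> h" and \<eta>: "0 < \<eta>" "\<eta> < 1 / real h" and \<delta>: "\<delta> = \<eta> / (2 * real h + 1)"
    and r: "1 \<le> rc" "rc \<le> h - 1" "rc + ra \<le> h" "rc + rb \<le> h" and q: "q = 1 / real h + \<delta>"
  shows "real rc * q + max ((real ra * q - 1 + \<delta>) + (real rb * q - 1 + \<delta>)) (\<delta> - 1) \<le> -1 / real h + \<eta>"
proof -
  have "2 \<le> real h"
    using h by simp
  note bounds = exponent_bounds[OF this \<eta> \<delta>]
  have rc: "real rc \<le> real h - 1"
    using r(2) h by (simp add: of_nat_diff)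
  have "real rc * q + (\<delta> - 1) \<le> -1 / real h + \<eta>"
    using bounds(4)[OF rc] unfolding q by linarith
  moreover have "real rc * q + ((real ra * q - 1 + \<delta>) + (real rb * q - 1 + \<delta>)) \<le> -1 / real h + \<eta>"
  proof -
    have "real (rc + ra + rb) \<le> 2 * real h - 1"
      using r by linarith
    moreover have "real rc * q + ((real ra * q - 1 + \<delta>) + (real rb * q - 1 + \<delta>))
        = real (rc + ra + rb) * (1 / real h + \<delta>) - 2 + 2 * \<delta>"
      unfolding q by (simp add: algebra_simps)
    ultimately show ?thesis
      using bounds(5)[of "real (rc + ra + rb)"] by linarith
  qed
  ultimately show ?thesis
    by (simp add: max_def)
qed

lemma generic_shape_sum_bound:
  assumes h: "2 \<le> h" and B: "1 \<le> B" and \<eta>: "0 < \<eta>" "\<eta> < 1 / real h"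
    and \<delta>: "\<delta> = \<eta> / (2 * real h + 1)" and a: "a = 1 - 1 / real h - \<delta>"
    and r: "1 \<le> rc" "rc \<le> h - 1" "rc + ra \<le> h" "rc + rb \<le> h"
  shows "\<exists>K\<ge>0. \<forall>N1 N2. N1 \<le> N2 \<longrightarrow> shape_sum h B a N1 N2 (rc, ra, rb) \<le> K * (real N1 + 1) powr (-1 / real h + \<eta>)"
proof -
  have "2 \<le> real h"
    using h by simp
  note bounds = exponent_bounds[OF this \<eta> \<delta>]
  have q: "1 - a = 1 / real h + \<delta>"
    using a by simp
  have "0 < 1 / real h"
    using h by simp
  then have a01: "0 < a" "a < 1"
    using q bounds(1,2) by linarith+
  define \<gamma> where "\<gamma> = max ((real ra * (1 - a) - 1 + \<delta>) + (real rb * (1 - a) - 1 + \<delta>)) (\<delta> - 1)"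
  have "real ra \<le> real h - 1" "real rb \<le> real h - 1"
    using r h by (simp_all add: of_nat_diff)
  then have \<alpha>\<beta>: "real ra * (1 - a) - 1 + \<delta> \<le> 0" "real rb * (1 - a) - 1 + \<delta> \<le> 0"
    unfolding q by (simp_all add: bounds(3))
  have e: "real rc * (1 - a) + \<gamma> \<le> -1 / real h + \<eta>"
    unfolding \<gamma>_def by (rule split_exponent_le[OF h \<eta> \<delta> r q])
  moreover have "-1 / real h + \<eta> < 0"
    using \<eta> by simp
  ultimately have e0: "real rc * (1 - a) + \<gamma> \<le> 0"
    by linarith
  have \<gamma>: "(real ra * (1 - a) - 1 + \<delta>) + (real rb * (1 - a) - 1 + \<delta>) \<le> \<gamma>" "\<delta> - 1 \<le> \<gamma>"
    by (simp_all add: \<gamma>_def)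
  have "\<exists>K\<ge>0. \<forall>N1 N2. N1 \<le> N2 \<longrightarrow> split_sum B a N1 N2 rc ra rb \<le> K * (real N1 + 1) powr (real rc * (1 - a) + \<gamma>)"
    by (rule split_sum_bound[OF a01 B bounds(1) \<alpha>\<beta> \<gamma> e0])
  then have "\<exists>K\<ge>0. \<forall>N1 N2. N1 \<le> N2 \<longrightarrow> shape_sum h B a N1 N2 (rc, ra, rb) \<le> K * (real N1 + 1) powr (real rc * (1 - a) + \<gamma>)"
    by (meson order_trans shape_sum_le_split_sum)
  then show ?thesis
    using e by (rule powr_bound_exponent_mono)
qed

lemma shape_sum_bound:
  assumes h: "2 \<le> h" and B: "1 \<le> B" and \<eta>: "0 < \<eta>" "\<eta> < 1 / real h"
    and \<delta>: "\<delta> = \<eta> / (2 * real h + 1)" and a: "a = 1 - 1 / real h - \<delta>"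
  shows "\<exists>K\<ge>0. \<forall>N1 N2. N1 \<le> N2 \<longrightarrow> shape_sum h B a N1 N2 s \<le> K * (real N1 + 1) powr (-1 / real h + \<eta>)"
proof -
  obtain rc ra rb where s: "s = (rc, ra, rb)"
    by (metis prod_cases3)
  consider "\<not> (1 \<le> rc \<and> rc + ra \<le> h \<and> rc + rb \<le> h)" | "rc = h" "ra = 0" "rb = 0"
    | "1 \<le> rc" "rc \<le> h - 1" "rc + ra \<le> h" "rc + rb \<le> h"
    by fastforce
  then show ?thesis
  proof cases
    case 1
    then have "shape_sum h B a N1 N2 s = 0" for N1 N2
      using pair_shape_bounds unfolding shape_sum_def s by (metis (mono_tags, lifting) mem_Collect_eq sum.neutral)
    then show ?thesis
      by auto
  next
    case 2
    have "2 \<le> real h"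
      using h by simp
    note bounds = exponent_bounds[OF this \<eta> \<delta>]
    have "0 < 1 / real h"
      using h by simp
    then have a01: "0 < a" "a < 1"
      using a bounds(1,2) by linarith+
    have "real (h - 1) * (1 - a) - 1 \<le> real (h - 1) * (1 / real h + \<delta>) - 1 + \<delta>"
      using a bounds(1) by simp
    also have "\<dots> \<le> -1 / real h + \<eta>"
      using h by (intro bounds(4)) (simp add: of_nat_diff)
    finally show ?thesis
      unfolding s 2 by (rule powr_bound_exponent_mono[OF equal_support_shape_sum_bound[OF a01 B h]])
  next
    case 3
    then show ?thesis
      unfolding s by (rule generic_shape_sum_bound[OF h B \<eta> \<delta> a])
  qed
qed

lemma overlap_sum_bound:
  assumes h: "2 \<le> h" and B: "1 \<le> B" and \<eta>: "0 < \<eta>" "\<eta> < 1 / real h"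
    and \<delta>: "\<delta> = \<eta> / (2 * real h + 1)" and a: "a = 1 - 1 / real h - \<delta>"
  shows "\<exists>K\<ge>0. \<forall>N1 N2. N1 \<le> N2 \<longrightarrow>
    (\<Sum>p\<in>overlap_pairs h B N1 N2. union_weight a p) \<le> K * (real N1 + 1) powr (-1 / real h + \<eta>)"
proof -
  let ?S = "{..h} \<times> {..h} \<times> {..h}"
  have "\<forall>s\<in>?S. \<exists>K\<ge>0. \<forall>N1 N2. N1 \<le> N2 \<longrightarrow> shape_sum h B a N1 N2 s \<le> K * (real N1 + 1) powr (-1 / real h + \<eta>)"
    using shape_sum_bound[OF assms] by blast
  then obtain K where K: "\<And>s. s \<in> ?S \<Longrightarrow> 0 \<le> K s"
    "\<And>s N1 N2. s \<in> ?S \<Longrightarrow> N1 \<le> N2 \<Longrightarrow> shape_sum h B a N1 N2 s \<le> K s * (real N1 + 1) powr (-1 / real h + \<eta>)"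
    by metis
  show ?thesis
  proof (intro exI[of _ "sum K ?S"] conjI allI impI)
    show "0 \<le> sum K ?S"
      using K(1) by (intro sum_nonneg) auto
    fix N1 N2 :: nat assume "N1 \<le> N2"
    then have "(\<Sum>s\<in>?S. shape_sum h B a N1 N2 s) \<le> (\<Sum>s\<in>?S. K s * (real N1 + 1) powr (-1 / real h + \<eta>))"
      using K(2) by (intro sum_mono) auto
    then show "(\<Sum>p\<in>overlap_pairs h B N1 N2. union_weight a p) \<le> sum K ?S * (real N1 + 1) powr (-1 / real h + \<eta>)"
      by (simp add: sum_overlap_pairs_eq_sum_shape_sums sum_distrib_right)
  qed
qed

section \<open>The random set\<close>

lemma cconst_nonneg: "0 < h \<Longrightarrow> \<epsilon> < 1 \<Longrightarrow> 0 \<le> cconst h b \<epsilon>"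
  unfolding cconst_def by (intro divide_nonneg_nonneg mult_nonneg_nonneg) auto

lemma pr_in_nonneg: "0 < h \<Longrightarrow> \<epsilon> < 1 \<Longrightarrow> 0 \<le> pr_in h b \<epsilon> x"
  unfolding pr_in_def using cconst_nonneg[of h \<epsilon> b] by (auto intro!: divide_nonneg_nonneg mult_nonneg_nonneg)

lemma pr_in_le_1: "pr_in h b \<epsilon> x \<le> 1"
  by (simp add: pr_in_def)

lemma Pr_sub_eq_prod:
  assumes "finite T" "0 < h" "\<epsilon> < 1"
  shows "Pr_sub h b \<epsilon> T = (\<Prod>x\<in>T. pr_in h b \<epsilon> x)"
proof -
  let ?M = "\<lambda>x. measure_pmf (bernoulli_pmf (pr_in h b \<epsilon> x))"
  interpret product_prob_space ?M UNIV
    by unfold_locales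
  have "Pr_sub h b \<epsilon> T = measure (Pi\<^sub>M UNIV ?M) {\<omega> \<in> space (Pi\<^sub>M UNIV ?M). \<forall>x\<in>T. \<omega> x \<in> {True}}"
    unfolding Pr_sub_def randset_def by simp
  also have "\<dots> = enn2real (\<Prod>x\<in>T. emeasure (?M x) {True})"
    unfolding measure_def using assms by (subst emeasure_PiM_Collect) auto
  also have "\<dots> = (\<Prod>x\<in>T. pr_in h b \<epsilon> x)"
    using pr_in_nonneg[OF assms(2,3)] pr_in_le_1
    by (simp add: emeasure_pmf_single prod_ennreal prod_nonneg)
  finally show ?thesis .
qed

lemma pr_in_le_powr:
  assumes h: "0 < h" and \<epsilon>: "\<epsilon> < 1" and \<delta>: "0 < \<delta>" and x: "1 \<le> real x"
  shows "pr_in h b \<epsilon> x \<le> cconst h b \<epsilon> / (real h * \<delta>) powr (1 / real h) * real x powr (1 / real h + \<delta> - 1)"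
proof -
  define e where "e = real h * \<delta>"
  have e: "0 < e"
    unfolding e_def using h \<delta> by simp
  have "pr_in h b \<epsilon> x \<le> cconst h b \<epsilon> * (real x * ln (real x)) powr (1 / real h) / real x"
    using x by (simp add: pr_in_def)
  also have "(real x * ln (real x)) powr (1 / real h) = real x powr (1 / real h) * ln (real x) powr (1 / real h)"
    using x by (auto intro: powr_mult)
  also have "ln (real x) powr (1 / real h) \<le> (real x powr e / e) powr (1 / real h)"
    using x e ln_powr_bound[of "real x" e] by (intro powr_mono2) auto
  also have "(real x powr e / e) powr (1 / real h) = real x powr \<delta> / e powr (1 / real h)"
    using e h by (simp add: powr_divide powr_powr e_def)
  finally have "pr_in h b \<epsilon> x
      \<le> cconst h b \<epsilon> * (real x powr (1 / real h) * (real x powr \<delta> / e powr (1 / real h))) / real x"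
    using x cconst_nonneg[OF h \<epsilon>] by (simp add: divide_right_mono mult_left_mono)
  also have "\<dots> = cconst h b \<epsilon> / e powr (1 / real h) * (real x powr (1 / real h + \<delta>) / real x powr 1)"
    using x by (simp add: powr_add)
  also have "\<dots> = cconst h b \<epsilon> / e powr (1 / real h) * real x powr (1 / real h + \<delta> - 1)"
    by (simp only: powr_diff)
  finally show ?thesis
    unfolding e_def .
qed

lemma powr_neg_le_weight:
  assumes "1 \<le> real x" "0 \<le> a"
  shows "real x powr (-a) \<le> 2 powr a * weight a x"
proof -
  have "(2 * real x) powr (-a) \<le> (real x + 1) powr (-a)"
    using assms by (intro powr_mono2') auto
  then show ?thesis
    using assms(1) by (simp add: weight_def powr_mult powr_minus field_simps)
qed

lemma pr_in_le_weight:
  assumes h: "0 < h" and \<epsilon>: "\<epsilon> < 1" and \<delta>: "0 < \<delta>" and a: "a = 1 - 1 / real h - \<delta>" "0 \<le> a"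
  shows "\<exists>C\<ge>1. \<forall>x. pr_in h b \<epsilon> x \<le> C * weight a x"
proof -
  define c where "c = cconst h b \<epsilon> / (real h * \<delta>) powr (1 / real h)"
  have c: "0 \<le> c"
    unfolding c_def using cconst_nonneg[OF h \<epsilon>] by simp
  have "pr_in h b \<epsilon> x \<le> max 1 (c * 2 powr a) * weight a x" for x
  proof (cases "x = 0")
    case True
    then show ?thesis
      by (simp add: pr_in_def weight_def)
  next
    case False
    have "-a = 1 / real h + \<delta> - 1"
      using a(1) by simp
    then have "pr_in h b \<epsilon> x \<le> c * real x powr (-a)"
      using pr_in_le_powr[OF h \<epsilon> \<delta>, of x b] False by (simp add: c_def)
    also have "\<dots> \<le> c * 2 powr a * weight a x"
      using powr_neg_le_weight[of x a] False a(2) c by (simp add: mult_left_mono mult.assoc)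
    also have "\<dots> \<le> max 1 (c * 2 powr a) * weight a x"
      by (intro mult_right_mono) auto
    finally show ?thesis .
  qed
  then show ?thesis
    by (intro exI[of _ "max 1 (c * 2 powr a)"]) auto
qed

lemma set_mset_sum_replicate_mset:
  fixes n :: nat
  shows "\<forall>i<n. 0 < b i \<Longrightarrow> set_mset (\<Sum>i<n. replicate_mset (b i) (k i)) = k ` {..<n}"
  by (induction n) (auto simp: lessThan_Suc)

lemma sum_mset_sum_replicate_mset:
  fixes n :: nat
  shows "sum_mset (\<Sum>i<n. replicate_mset (b i) (k i)) = (\<Sum>i<n. b i * (k i :: nat))"
  by (induction n) simp_all

lemma size_sum_replicate_mset:
  fixes n :: nat
  shows "size (\<Sum>i<n. replicate_mset (b i) (k i)) = (\<Sum>i<n. b i)"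
  by (induction n) simp_all

lemma Sset_imp_rep_msets:
  assumes "\<forall>i<h. 0 < b i" "R \<in> Sset h b N"
  shows "\<exists>M\<in>rep_msets h (\<Sum>i<h. b i) N. set_mset M = R"
proof -
  obtain k where R: "R = k ` {..<h}" and N: "(\<Sum>i<h. b i * k i) = N"
    using assms(2) unfolding Sset_def by blast
  let ?M = "\<Sum>i<h. replicate_mset (b i) (k i)"
  have "card (k ` {..<h}) \<le> h"
    using card_image_le[of "{..<h}" k] by simp
  then have "?M \<in> rep_msets h (\<Sum>i<h. b i) N"
    using N by (simp add: rep_msets_def set_mset_sum_replicate_mset[OF assms(1)]
      sum_mset_sum_replicate_mset size_sum_replicate_mset)
  moreover have "set_mset ?M = R"
    by (simp add: R set_mset_sum_replicate_mset[OF assms(1)])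
  ultimately show ?thesis
    by blast
qed

lemma Pr_sub_le_set_weight:
  assumes "finite A" "card A \<le> k" "0 < h" "\<epsilon> < 1"
    and C: "1 \<le> C" "\<And>x. pr_in h b \<epsilon> x \<le> C * weight a x"
  shows "Pr_sub h b \<epsilon> A \<le> C ^ k * set_weight a A"
proof -
  have "Pr_sub h b \<epsilon> A = (\<Prod>x\<in>A. pr_in h b \<epsilon> x)"
    using assms by (intro Pr_sub_eq_prod)
  also have "\<dots> \<le> (\<Prod>x\<in>A. C * weight a x)"
    by (intro prod_mono) (use C pr_in_nonneg[OF assms(3,4)] in auto)
  also have "\<dots> = C ^ card A * set_weight a A"
    by (simp add: prod.distrib)
  also have "\<dots> \<le> C ^ k * set_weight a A"
    using C assms(2) by (intro mult_right_mono power_increasing) auto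
  finally show ?thesis .
qed

text \<open>The condition \<open>R \<noteq> S\<close> is imposed only for \<open>N1 = N2\<close>, as in the three sums of \<open>Delta\<close>.\<close>

definition overlapping_set_pairs :: "nat \<Rightarrow> (nat \<Rightarrow> nat) \<Rightarrow> nat \<Rightarrow> nat \<Rightarrow> (nat set \<times> nat set) set" where
  "overlapping_set_pairs h b N1 N2 = {(R, S). R \<in> Sset h b N1 \<and> S \<in> Sset h b N2 \<and> R \<inter> S \<noteq> {}
     \<and> (N1 = N2 \<longrightarrow> R \<noteq> S)}"

definition pair_prob_sum :: "nat \<Rightarrow> (nat \<Rightarrow> nat) \<Rightarrow> real \<Rightarrow> nat \<Rightarrow> nat \<Rightarrow> real" where
  "pair_prob_sum h b \<epsilon> N1 N2 = (\<Sum>(R, S)\<in>overlapping_set_pairs h b N1 N2. Pr_sub h b \<epsilon> (R \<union> S))"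

lemma Delta_eq_pair_prob_sums:
  "n < m \<Longrightarrow> Delta h b \<epsilon> n m = pair_prob_sum h b \<epsilon> n n + 2 * pair_prob_sum h b \<epsilon> n m + pair_prob_sum h b \<epsilon> m m"
  unfolding Delta_def pair_prob_sum_def overlapping_set_pairs_def by (simp add: conj_ac)

definition rep_mset :: "nat \<Rightarrow> (nat \<Rightarrow> nat) \<Rightarrow> nat \<Rightarrow> nat set \<Rightarrow> nat multiset" where
  "rep_mset h b N R = (SOME M. M \<in> rep_msets h (\<Sum>i<h. b i) N \<and> set_mset M = R)"

lemma
  assumes "\<forall>i<h. 0 < b i" "R \<in> Sset h b N"
  shows rep_mset_in_rep_msets: "rep_mset h b N R \<in> rep_msets h (\<Sum>i<h. b i) N"
    and set_mset_rep_mset: "set_mset (rep_mset h b N R) = R"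
proof -
  have "rep_mset h b N R \<in> rep_msets h (\<Sum>i<h. b i) N \<and> set_mset (rep_mset h b N R) = R"
    unfolding rep_mset_def by (rule someI_ex) (use Sset_imp_rep_msets[OF assms] in blast)
  then show "rep_mset h b N R \<in> rep_msets h (\<Sum>i<h. b i) N" "set_mset (rep_mset h b N R) = R"
    by blast+
qed

lemma pair_prob_sum_le_overlap_sum:
  assumes b: "\<forall>i<h. 0 < b i" and h: "0 < h" and \<epsilon>: "\<epsilon> < 1"
    and C: "1 \<le> C" "\<And>x. pr_in h b \<epsilon> x \<le> C * weight a x"
  shows "pair_prob_sum h b \<epsilon> N1 N2 \<le> C ^ (2 * h) * (\<Sum>p\<in>overlap_pairs h (\<Sum>i<h. b i) N1 N2. union_weight a p)"
proof -
  let ?P = "overlapping_set_pairs h b N1 N2"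
  let ?g = "\<lambda>(R, S). (rep_mset h b N1 R, rep_mset h b N2 S)"
  note rep = rep_mset_in_rep_msets[OF b] set_mset_rep_mset[OF b]
  have "pair_prob_sum h b \<epsilon> N1 N2 \<le> (\<Sum>p\<in>overlap_pairs h (\<Sum>i<h. b i) N1 N2. C ^ (2 * h) * union_weight a p)"
    unfolding pair_prob_sum_def
  proof (rule sum_le_sum_inj_on[where g = ?g])
    show "inj_on ?g ?P"
      by (rule inj_onI) (clarsimp simp: overlapping_set_pairs_def, metis rep(2))
    show "?g ` ?P \<subseteq> overlap_pairs h (\<Sum>i<h. b i) N1 N2"
      using rep by (auto simp: overlapping_set_pairs_def overlap_pairs_def)
    show "(\<lambda>(R, S). Pr_sub h b \<epsilon> (R \<union> S)) p \<le> C ^ (2 * h) * union_weight a (?g p)" if "p \<in> ?P" for p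
    proof -
      obtain R S where p: "p = (R, S)" and R: "R \<in> Sset h b N1" and S: "S \<in> Sset h b N2"
        using \<open>p \<in> ?P\<close> by (auto simp: overlapping_set_pairs_def)
      have "finite R" "finite S" "card R \<le> h" "card S \<le> h"
        using rep[OF R] rep[OF S] finite_set_mset[of "rep_mset h b N1 R"] finite_set_mset[of "rep_mset h b N2 S"]
        by (auto simp: rep_msets_def)
      then have "Pr_sub h b \<epsilon> (R \<union> S) \<le> C ^ (2 * h) * set_weight a (R \<union> S)"
        using card_Un_le[of R S] by (intro Pr_sub_le_set_weight[OF _ _ h \<epsilon> C]) auto
      then show ?thesis
        using rep(2)[OF R] rep(2)[OF S] by (simp add: p union_weight_def)
    qed
  qed (use C(1) in \<open>simp_all add: finite_overlap_pairs\<close>)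
  then show ?thesis
    by (simp add: sum_distrib_left)
qed

lemma pair_prob_sum_bound:
  assumes h: "2 \<le> h" and b: "\<forall>i<h. 0 < b i" and \<epsilon>: "\<epsilon> < 1" and \<eta>: "0 < \<eta>" "\<eta> < 1 / real h"
  shows "\<exists>K\<ge>0. \<forall>N1 N2. N1 \<le> N2 \<longrightarrow> pair_prob_sum h b \<epsilon> N1 N2 \<le> K * (real N1 + 1) powr (-1 / real h + \<eta>)"
proof -
  define \<delta> where "\<delta> = \<eta> / (2 * real h + 1)"
  define a where "a = 1 - 1 / real h - \<delta>"
  have "2 \<le> real h"
    using h by simp
  note bounds = exponent_bounds[OF this \<eta> \<delta>_def]
  have "b 0 \<le> (\<Sum>i<h. b i)" "0 < b 0"
    using h b by (auto intro!: member_le_sum)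
  then have B: "1 \<le> (\<Sum>i<h. b i)"
    by linarith
  obtain K where K: "0 \<le> K" "\<And>N1 N2. N1 \<le> N2 \<Longrightarrow>
      (\<Sum>p\<in>overlap_pairs h (\<Sum>i<h. b i) N1 N2. union_weight a p) \<le> K * (real N1 + 1) powr (-1 / real h + \<eta>)"
    using overlap_sum_bound[OF h B \<eta> \<delta>_def a_def] by blast
  obtain C where C: "1 \<le> C" "\<And>x. pr_in h b \<epsilon> x \<le> C * weight a x"
    using pr_in_le_weight[of h \<epsilon> \<delta> a b] h \<epsilon> bounds(1,2) by (auto simp: a_def)
  show ?thesis
  proof (intro exI[of _ "C ^ (2 * h) * K"] conjI allI impI)
    fix N1 N2 :: nat assume "N1 \<le> N2"
    have "pair_prob_sum h b \<epsilon> N1 N2 \<le> C ^ (2 * h) * (\<Sum>p\<in>overlap_pairs h (\<Sum>i<h. b i) N1 N2. union_weight a p)"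
      using h by (intro pair_prob_sum_le_overlap_sum[OF b _ \<epsilon> C]) simp
    also have "\<dots> \<le> C ^ (2 * h) * (K * (real N1 + 1) powr (-1 / real h + \<eta>))"
      using C(1) K(2)[OF \<open>N1 \<le> N2\<close>] by (intro mult_left_mono) auto
    finally show "pair_prob_sum h b \<epsilon> N1 N2 \<le> C ^ (2 * h) * K * (real N1 + 1) powr (-1 / real h + \<eta>)"
      by (simp add: mult.assoc)
  qed (use C K in simp)
qed

lemma Delta_le_powr:
  assumes h: "2 \<le> h" and b: "\<forall>i<h. 0 < b i" and \<epsilon>: "\<epsilon> < 1" and "0 < \<eta>"
  shows "\<exists>K\<ge>0. \<forall>n m. 1 \<le> n \<longrightarrow> n < m \<longrightarrow> Delta h b \<epsilon> n m \<le> K * real n powr (-1 / real h + \<eta>)"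
proof -
  define \<eta>' where "\<eta>' = min \<eta> (1 / (2 * real h))"
  have \<eta>': "0 < \<eta>'" "\<eta>' < 1 / real h" "\<eta>' \<le> \<eta>"
    using \<open>0 < \<eta>\<close> h by (auto simp: \<eta>'_def min_def field_simps)
  obtain K where K: "0 \<le> K"
    "\<And>N1 N2. N1 \<le> N2 \<Longrightarrow> pair_prob_sum h b \<epsilon> N1 N2 \<le> K * (real N1 + 1) powr (-1 / real h + \<eta>')"
    using pair_prob_sum_bound[OF h b \<epsilon> \<eta>'(1,2)] by blast
  have decay: "K * (real N + 1) powr (-1 / real h + \<eta>') \<le> K * real n powr (-1 / real h + \<eta>)"
    if "1 \<le> n" "n \<le> N" for n N
  proof -
    have "(real N + 1) powr (-1 / real h + \<eta>') \<le> real n powr (-1 / real h + \<eta>')"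
      using that \<eta>'(2) by (intro powr_mono2') auto
    also have "\<dots> \<le> real n powr (-1 / real h + \<eta>)"
      using that \<eta>'(3) by (intro powr_mono) auto
    finally show ?thesis
      using K(1) by (rule mult_left_mono)
  qed
  show ?thesis
  proof (intro exI[of _ "4 * K"] conjI allI impI)
    fix n m :: nat assume "1 \<le> n" "n < m"
    then have "pair_prob_sum h b \<epsilon> n n + 2 * pair_prob_sum h b \<epsilon> n m + pair_prob_sum h b \<epsilon> m m
        \<le> 4 * (K * real n powr (-1 / real h + \<eta>))"
      using K(2)[of n n] K(2)[of n m] K(2)[of m m] decay[of n n] decay[of n m] by linarith
    then show "Delta h b \<epsilon> n m \<le> 4 * K * real n powr (-1 / real h + \<eta>)"
      using Delta_eq_pair_prob_sums[OF \<open>n < m\<close>] by simp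
  qed (use K in simp)
qed

theorem mainTheorem15:
  fixes h :: nat and b :: "nat \<Rightarrow> nat" and \<epsilon> :: real
  assumes "h \<ge> 2"
    and "\<forall>i<h. b i > 0"
    and "Gcd (b ` {..<h}) = 1"
    and "0 < \<epsilon>" and "\<epsilon> < 1/2"
  shows "\<forall>\<eta>>0. \<exists>K::real. \<forall>n m :: nat. 2 \<le> n \<longrightarrow> n < m \<longrightarrow>
     Delta h b \<epsilon> n m \<le> K * ((1 + real (m - n) powr (- 1 / real h + \<eta>)) * real n powr (- 1 / real h + \<eta>)
                           + real m powr (- 1 / real h + \<eta>))"
proof (intro allI impI)
  fix \<eta> :: real assume "0 < \<eta>"
  moreover have "\<epsilon> < 1"
    using assms(5) by simp
  ultimately obtain K where K: "0 \<le> K"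
    "\<And>n m. 1 \<le> n \<Longrightarrow> n < m \<Longrightarrow> Delta h b \<epsilon> n m \<le> K * real n powr (-1 / real h + \<eta>)"
    using Delta_le_powr[OF assms(1,2)] by blast
  have bracket: "K * real n powr (-1 / real h + \<eta>) \<le> K * ((1 + real (m - n) powr (- 1 / real h + \<eta>))
      * real n powr (- 1 / real h + \<eta>) + real m powr (- 1 / real h + \<eta>))" for n m :: nat
    using K(1) by (intro mult_left_mono) (simp_all add: distrib_right)
  show "\<exists>K. \<forall>n m. 2 \<le> n \<longrightarrow> n < m \<longrightarrow> Delta h b \<epsilon> n m \<le> K * ((1 + real (m - n) powr (- 1 / real h + \<eta>))
      * real n powr (- 1 / real h + \<eta>) + real m powr (- 1 / real h + \<eta>))"
  proof (intro exI[of _ K] allI impI)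
    fix n m :: nat assume "2 \<le> n" "n < m"
    then show "Delta h b \<epsilon> n m \<le> K * ((1 + real (m - n) powr (- 1 / real h + \<eta>))
        * real n powr (- 1 / real h + \<eta>) + real m powr (- 1 / real h + \<eta>))"
      using K(2)[of n m] bracket[of n m] by linarith
  qed
qed

end
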